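(* Let $X$ be a connected simple graph with countable vertex set, bounded degree and no vertex of degree one; let $M=\sup_{x\in VX}\deg(x)$, $\alpha=\frac{M+\sqrt{M^2+4M}}{2}$, $f(z)=A_Xz-Q_Xz^2$. For $x_0,x\in VX$ define $Z_X(u,x_0,x)=\exp\Big(\sum_{m=1}^\infty\frac{N_{X,m}(x_0,x)}{m}u^m\Big)$. Then for $|u|<1/\alpha$, $$Z_X(u,x_0,x)=(1-u^2)^{-\frac{\deg(x_0)-2}{2}\delta_{x_0}(x)}\times\exp\big(-[\log(I-(D_X-\Delta_X)u+(D_X-I)u^2)](x_0,x)\big)$$ $$\times\exp\Big(\int_0^u z^2\sum_{n=1}^\infty\frac1n\sum_{j=1}^{n-1}j\big[f(z)^{n-1-j}[A_X,D_X]f(z)^{j-1}\big](x_0,x)\,dz\Big)\times\exp\Big(\sum_{m=3}^\infty\frac{R_m(x_0,x)}{m}u^m\Big).$$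
   Context: A graph $X=(VX,EX)$ has maps $e\mapsto(o(e),t(e))$, $e\mapsto\bar e$ with $\bar e\ne e$, $\bar{\bar e}=e$, $o(e)=t(\bar e)$; simple means no loops and no multiple edges. $E_x=\{e:o(e)=x\}$, $\deg(x)=|E_x|$. A path $c=(e_1,\dots,e_n)$ ($t(e_i)=o(e_{i+1})$, $o(c)=o(e_1)$, $t(c)=t(e_n)$, length $n$; a vertex is a path of length 0) is geodesic if $e_{i+1}\ne\bar e_i$ for all $i$; a geodesic loop is a closed geodesic path. Operators on $\ell^2(VX)$: $(A_Xf)(x)=\sum_{e\in E_x}f(t(e))$, $(D_Xf)(x)=\deg(x)f(x)$, $\Delta_X=D_X-A_X$, $Q_X=D_X-I$, $[A_X,D_X]=A_XD_X-D_XA_X$; $(C_mf)(x)=\sum f(t(c))$ over geodesic paths $c$ of length $m$ with $o(c)=x$. $B_m=C_m$ for $m\le2$, $B_m=C_m-(Q_X-I)\sum_{j=1}^{\lfloor m/2\rfloor}C_{m-2j}$ for $m\ge3$. With $c_k(x)$ the number of geodesic loops of length $k$ at $x$ and $(\Delta_Xc_k)(x)=\deg(x)c_k(x)-\sum_{e\in E_x}c_k(t(e))$: $R_m=0$ for $m\le2$ and for $m\ge3$ $R_m$ is multiplication by $x\mapsto\sum_{j=1}^{\lceil m/2\rceil-1}j(\Delta_Xc_{m-2j})(x)$; $R_m^+=0$ for $m\le2$, $R_m^+=(Q_X-I)\delta_{2\mathbb Z}(m)+R_m$ for $m\ge3$ ($\delta_{2\mathbb Z}(m)=1$ if $m$ even,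 else $0$); $N_{X,m}=B_m+R_m^+$. For a bounded operator $B$, $B(x_0,x)=(B\delta_{x_0})(x)$ where $\delta_{x_0}$ is the indicator of $x_0$. $\log(I-g)=-\sum_{n\ge1}g^n/n$ for $\|g\|<1$ (here $g=f(u)$, which has norm $<1$ for $|u|<1/\alpha$). *)

theory Defs
  imports "HOL-Complex_Analysis.Complex_Analysis" "HOL-Library.Countable"
begin

text \<open>Operators are locally finite linear maps on functions 'v => complex;
on indicator functions they agree with the bounded operators on l2(VX).\<close>

type_synonym 'v op = "('v \<Rightarrow> complex) \<Rightarrow> 'v \<Rightarrow> complex"

definition nbrs :: "('v \<Rightarrow> 'v \<Rightarrow> bool) \<Rightarrow> 'v \<Rightarrow> 'v set" where
  "nbrs adj x = {y. adj x y}"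

definition deg :: "('v \<Rightarrow> 'v \<Rightarrow> bool) \<Rightarrow> 'v \<Rightarrow> nat" where
  "deg adj x = card (nbrs adj x)"

definition simple_graph :: "('v \<Rightarrow> 'v \<Rightarrow> bool) \<Rightarrow> bool" where
  "simple_graph adj \<longleftrightarrow> (\<forall>x y. adj x y \<longrightarrow> adj y x) \<and> (\<forall>x. \<not> adj x x)"

definition connected_graph :: "('v \<Rightarrow> 'v \<Rightarrow> bool) \<Rightarrow> bool" where
  "connected_graph adj \<longleftrightarrow> (\<forall>x y. adj\<^sup>*\<^sup>* x y)"

definition bounded_degree :: "('v \<Rightarrow> 'v \<Rightarrow> bool) \<Rightarrow> bool" where
  "bounded_degree adj \<longleftrightarrow> (\<exists>K. \<forall>x. finite (nbrs adj x) \<and> deg adj x \<le> K)"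

definition max_deg :: "('v \<Rightarrow> 'v \<Rightarrow> bool) \<Rightarrow> nat" where
  "max_deg adj = (SUP x. deg adj x)"

definition alpha :: "('v \<Rightarrow> 'v \<Rightarrow> bool) \<Rightarrow> real" where
  "alpha adj = (let M = real (max_deg adj) in (M + sqrt (M\<^sup>2 + 4 * M)) / 2)"

definition delta :: "'v \<Rightarrow> 'v \<Rightarrow> complex" where
  "delta x0 = (\<lambda>y. if y = x0 then 1 else 0)"

definition kernel :: "'v op \<Rightarrow> 'v \<Rightarrow> 'v \<Rightarrow> complex" where
  "kernel B x0 x = B (delta x0) x"

definition A_op :: "('v \<Rightarrow> 'v \<Rightarrow> bool) \<Rightarrow> 'v op" where
  "A_op adj g x = (\<Sum>y\<in>nbrs adj x. g y)"

definition D_op :: "('v \<Rightarrow> 'v \<Rightarrow> bool) \<Rightarrow> 'v op" where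
  "D_op adj g x = of_nat (deg adj x) * g x"

definition Delta_op :: "('v \<Rightarrow> 'v \<Rightarrow> bool) \<Rightarrow> 'v op" where
  "Delta_op adj g x = D_op adj g x - A_op adj g x"

definition Q_op :: "('v \<Rightarrow> 'v \<Rightarrow> bool) \<Rightarrow> 'v op" where
  "Q_op adj g x = D_op adj g x - g x"

definition comm_AD :: "('v \<Rightarrow> 'v \<Rightarrow> bool) \<Rightarrow> 'v op" where
  "comm_AD adj g = (\<lambda>x. A_op adj (D_op adj g) x - D_op adj (A_op adj g) x)"

text \<open>Geodesic paths of length m starting at x, as vertex sequences (simple graph:
an edge is an ordered adjacent pair; e_{i+1} \<noteq> reverse e_i iff no immediate backtracking).\<close>
definition geopaths :: "('v \<Rightarrow> 'v \<Rightarrow> bool) \<Rightarrow> nat \<Rightarrow> 'v \<Rightarrow> 'v list set" where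
  "geopaths adj m x = {p. length p = Suc m \<and> p ! 0 = x
      \<and> (\<forall>i<m. adj (p ! i) (p ! Suc i))
      \<and> (\<forall>i. Suc (Suc i) \<le> m \<longrightarrow> p ! Suc (Suc i) \<noteq> p ! i)}"

definition C_op :: "('v \<Rightarrow> 'v \<Rightarrow> bool) \<Rightarrow> nat \<Rightarrow> 'v op" where
  "C_op adj m g x = (\<Sum>p\<in>geopaths adj m x. g (last p))"

definition B_op :: "('v \<Rightarrow> 'v \<Rightarrow> bool) \<Rightarrow> nat \<Rightarrow> 'v op" where
  "B_op adj m g x = (if m \<le> 2 then C_op adj m g x
     else C_op adj m g x - (Q_op adj (\<lambda>y. \<Sum>j=1..m div 2. C_op adj (m - 2*j) g y) x
                            - (\<Sum>j=1..m div 2. C_op adj (m - 2*j) g x)))"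

definition c_loops :: "('v \<Rightarrow> 'v \<Rightarrow> bool) \<Rightarrow> nat \<Rightarrow> 'v \<Rightarrow> complex" where
  "c_loops adj k x = of_nat (card {p\<in>geopaths adj k x. last p = x})"

definition R_op :: "('v \<Rightarrow> 'v \<Rightarrow> bool) \<Rightarrow> nat \<Rightarrow> 'v op" where
  "R_op adj m g x = (if m \<le> 2 then 0
     else (\<Sum>j=1..(m+1) div 2 - 1. of_nat j * Delta_op adj (c_loops adj (m - 2*j)) x) * g x)"

definition Rplus_op :: "('v \<Rightarrow> 'v \<Rightarrow> bool) \<Rightarrow> nat \<Rightarrow> 'v op" where
  "Rplus_op adj m g x = (if m \<le> 2 then 0
     else (if even m then Q_op adj g x - g x else 0) + R_op adj m g x)"

definition N_op :: "('v \<Rightarrow> 'v \<Rightarrow> bool) \<Rightarrow> nat \<Rightarrow> 'v op" where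
  "N_op adj m g x = B_op adj m g x + Rplus_op adj m g x"

definition f_op :: "('v \<Rightarrow> 'v \<Rightarrow> bool) \<Rightarrow> complex \<Rightarrow> 'v op" where
  "f_op adj z g x = A_op adj g x * z - Q_op adj g x * z\<^sup>2"

definition log_I_minus_kernel :: "'v op \<Rightarrow> 'v \<Rightarrow> 'v \<Rightarrow> complex" where
  "log_I_minus_kernel G x0 x = - (\<Sum>n. kernel (G ^^ Suc n) x0 x / of_nat (Suc n))"

definition Z_X :: "('v \<Rightarrow> 'v \<Rightarrow> bool) \<Rightarrow> complex \<Rightarrow> 'v \<Rightarrow> 'v \<Rightarrow> complex" where
  "Z_X adj u x0 x = exp (\<Sum>k. kernel (N_op adj (Suc k)) x0 x / of_nat (Suc k) * u ^ Suc k)"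

end

(*
  Write f(z) = A z - Q z^2. Splitting geodesic paths by their first step gives
  C_m = T_m - T_(m-2) for the operator polynomials T_0 = I, T_1 = A,
  T_(m+2) = A T_(m+1) - Q T_m, and hence B_m = T_m - Q T_(m-2). Since |T_m| <= alpha^m, where
  alpha^2 = M alpha + M, the series sum_m T_m z^m converges for |z| < 1/alpha; it is a bounded
  solution of W = I + f(z) W, so it coincides with the Neumann series sum_n f(z)^n. Consequently
  sum_m B_(m+1) z^m = f'(z) (I - f(z))^(-1) + z (Q - I).

  Differentiating -log(I - f(z)) = sum_n f(z)^n / n termwise gives the same operator, except that
  f'(z) has to be moved past powers of f(z); as f(z) f'(z) = f'(z) f(z) - z^2 [A,D], this produces
  exactly the commutator integrand. The even terms Q - I of R^+_m contribute (Q - I) z^3 / (1 - z^2),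
  which together with z (Q - I) is the derivative of the logarithm of the factor
  (1 - z^2)^(-(deg x0 - 2)/2) on the diagonal. Hence the logarithms of both sides have the same
  derivative on the disc |z| < 1/alpha and vanish at 0, and integrating along the segment [0, u]
  gives the identity.
*)

theory Submission
  imports Defs
begin

section \<open>Linear operators on vertex functions\<close>

definition op_linear :: "'v op \<Rightarrow> bool" where
  "op_linear F \<longleftrightarrow> (\<forall>h1 h2 x. F (\<lambda>y. h1 y + h2 y) x = F h1 x + F h2 x)
                   \<and> (\<forall>c h x. F (\<lambda>y. c * h y) x = c * F h x)"

lemma op_linear_add: "op_linear F \<Longrightarrow> F (\<lambda>y. h1 y + h2 y) x = F h1 x + F h2 x"
  unfolding op_linear_def by blast

lemma op_linear_scale: "op_linear F \<Longrightarrow> F (\<lambda>y. c * h y) x = c * F h x"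
  unfolding op_linear_def by blast

lemma op_linear_zero: "op_linear F \<Longrightarrow> F (\<lambda>y. 0) x = 0"
  using op_linear_scale[of F 0 "\<lambda>y. 0" x] by simp

lemma op_linear_diff: "op_linear F \<Longrightarrow> F (\<lambda>y. h1 y - h2 y) x = F h1 x - F h2 x"
  using op_linear_add[of F h1 "\<lambda>y. (-1) * h2 y" x] op_linear_scale[of F "-1" h2 x] by simp

lemma op_linear_sum:
  assumes "op_linear F" and "finite I"
  shows "F (\<lambda>y. \<Sum>i\<in>I. h i y) x = (\<Sum>i\<in>I. F (h i) x)"
  using assms(2)
proof (induction I rule: finite_induct)
  case empty
  then show ?case using op_linear_zero[OF assms(1)] by simp
next
  case (insert a I)
  then show ?case using op_linear_add[OF assms(1), of "h a" "\<lambda>y. \<Sum>i\<in>I. h i y" x] by simp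
qed

lemma op_linear_A_op: "op_linear (A_op adj)"
  unfolding op_linear_def A_op_def by (auto simp: sum.distrib sum_distrib_left)

lemma op_linear_Q_op: "op_linear (Q_op adj)"
  unfolding op_linear_def Q_op_def D_op_def by (auto simp: algebra_simps)

lemma op_linear_f_op: "op_linear (f_op adj z)"
  unfolding op_linear_def f_op_def
  by (simp add: op_linear_add[OF op_linear_A_op] op_linear_add[OF op_linear_Q_op]
      op_linear_scale[OF op_linear_A_op] op_linear_scale[OF op_linear_Q_op] algebra_simps)

definition df_op :: "('v \<Rightarrow> 'v \<Rightarrow> bool) \<Rightarrow> complex \<Rightarrow> 'v op" where
  "df_op adj z g x = A_op adj g x - 2 * z * Q_op adj g x"

lemma f_op_df_op_commute:
  "f_op adj z (df_op adj z g) x = df_op adj z (f_op adj z g) x - z\<^sup>2 * comm_AD adj g x"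
  unfolding f_op_def df_op_def comm_AD_def A_op_def Q_op_def D_op_def
  by (simp add: sum_subtractf sum.distrib sum_distrib_left sum_distrib_right algebra_simps
      power2_eq_square)

lemma f_op_power_df_op_commute:
  "(f_op adj z ^^ i) (df_op adj z h) x = df_op adj z ((f_op adj z ^^ i) h) x
     - z\<^sup>2 * (\<Sum>l<i. (f_op adj z ^^ l) (comm_AD adj ((f_op adj z ^^ (i - 1 - l)) h)) x)"
proof (induction i arbitrary: x)
  case 0
  then show ?case by simp
next
  case (Suc i)
  let ?f = "f_op adj z"
  have IH: "(?f ^^ i) (df_op adj z h) = (\<lambda>y. df_op adj z ((?f ^^ i) h) y
      - z\<^sup>2 * (\<Sum>l<i. (?f ^^ l) (comm_AD adj ((?f ^^ (i - 1 - l)) h)) y))"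
    using Suc.IH by (simp add: fun_eq_iff)
  have "(?f ^^ Suc i) (df_op adj z h) x
      = ?f (df_op adj z ((?f ^^ i) h)) x
        - z\<^sup>2 * (\<Sum>l<i. ?f ((?f ^^ l) (comm_AD adj ((?f ^^ (i - 1 - l)) h))) x)"
    by (simp add: IH op_linear_diff[OF op_linear_f_op] op_linear_scale[OF op_linear_f_op]
        op_linear_sum[OF op_linear_f_op])
  also have "?f (df_op adj z ((?f ^^ i) h)) x
      = df_op adj z ((?f ^^ Suc i) h) x - z\<^sup>2 * comm_AD adj ((?f ^^ i) h) x"
    by (simp add: f_op_df_op_commute)
  finally show ?case
    by (simp only: sum.lessThan_Suc_shift) (simp add: algebra_simps)
qed

lemma sum_lessThan_triangle:
  fixes h :: "nat \<Rightarrow> 'a::comm_ring_1"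
  shows "(\<Sum>i<Suc k. \<Sum>l<i. h l) = (\<Sum>j=1..k. of_nat j * h (k - j))"
proof -
  have "(\<Sum>i<Suc k. \<Sum>l<i. h l) = (\<Sum>l<k. of_nat (k - l) * h l)"
  proof (induction k)
    case (Suc k)
    have "(\<Sum>l<Suc k. of_nat (Suc k - l) * h l) = (\<Sum>l<Suc k. of_nat (k - l) * h l + h l)"
      by (intro sum.cong refl) (simp add: Suc_diff_le algebra_simps)
    then show ?case using Suc.IH by (simp add: sum.distrib)
  qed simp
  also have "\<dots> = (\<Sum>j=1..k. of_nat j * h (k - j))"
    by (rule sum.reindex_bij_witness[where i="\<lambda>j. k - j" and j="\<lambda>l. k - l"]) auto
  finally show ?thesis .
qed

text \<open>Moving \<open>df_op\<close> to the front in each term of the derivative of \<open>f(z)^(k+1)\<close>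
  leaves the commutator sum of the theorem.\<close>
lemma sum_f_op_power_df_op:
  "(\<Sum>i<Suc k. (f_op adj z ^^ i) (df_op adj z ((f_op adj z ^^ (k - i)) g)) x)
   = of_nat (Suc k) * df_op adj z ((f_op adj z ^^ k) g) x
     - z\<^sup>2 * (\<Sum>j=1..k. of_nat j *
                 (f_op adj z ^^ (k - j)) (comm_AD adj ((f_op adj z ^^ (j - 1)) g)) x)"
proof -
  let ?f = "f_op adj z"
  let ?h = "\<lambda>l. (?f ^^ l) (comm_AD adj ((?f ^^ (k - 1 - l)) g)) x"
  have "(?f ^^ i) (df_op adj z ((?f ^^ (k - i)) g)) x
      = df_op adj z ((?f ^^ k) g) x - z\<^sup>2 * (\<Sum>l<i. ?h l)"
    if i: "i < Suc k" for i
  proof -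
    have "(?f ^^ i) ((?f ^^ (k - i)) g) = (?f ^^ k) g"
      using i funpow_add[of i "k - i" ?f] by (simp add: fun_eq_iff)
    moreover have "(?f ^^ (i - 1 - l)) ((?f ^^ (k - i)) g) = (?f ^^ (k - 1 - l)) g" if "l < i" for l
    proof -
      have "i - 1 - l + (k - i) = k - 1 - l" using i that by auto
      then show ?thesis using funpow_add[of "i - 1 - l" "k - i" ?f] by (simp add: fun_eq_iff)
    qed
    ultimately show ?thesis unfolding f_op_power_df_op_commute by simp
  qed
  then have "(\<Sum>i<Suc k. (?f ^^ i) (df_op adj z ((?f ^^ (k - i)) g)) x)
      = (\<Sum>i<Suc k. df_op adj z ((?f ^^ k) g) x - z\<^sup>2 * (\<Sum>l<i. ?h l))"
    by (intro sum.cong) auto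
  also have "\<dots> = of_nat (Suc k) * df_op adj z ((?f ^^ k) g) x - z\<^sup>2 * (\<Sum>i<Suc k. \<Sum>l<i. ?h l)"
    by (simp only: sum_subtractf sum_distrib_left[symmetric] sum_constant card_lessThan)
  also have "(\<Sum>i<Suc k. \<Sum>l<i. ?h l) = (\<Sum>j=1..k. of_nat j * ?h (k - j))"
    by (rule sum_lessThan_triangle)
  also have "\<dots> = (\<Sum>j=1..k. of_nat j * (?f ^^ (k - j)) (comm_AD adj ((?f ^^ (j - 1)) g)) x)"
    by (intro sum.cong refl) (auto simp: Suc_diff_le)
  finally show ?thesis .
qed

section \<open>Power series\<close>

lemma summable_square_times_geometric:
  fixes t :: real
  assumes "0 \<le> t" "t < 1"
  shows "summable (\<lambda>k. real (k + 1) ^ 2 * t ^ k)"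
proof -
  have geom: "summable (\<lambda>n. diffs (\<lambda>_. 1::real) n * x ^ n)" if "norm x < 1" for x :: real
    by (rule termdiff_converges[where K=1]) (use that in \<open>auto intro: summable_geometric\<close>)
  have "summable (\<lambda>n. diffs (\<lambda>n. real (Suc n)) n * x ^ n)" if "norm x < 1" for x :: real
  proof (rule termdiff_converges[where K=1])
    fix y :: real
    assume "norm y < 1"
    then show "summable (\<lambda>n. real (Suc n) * y ^ n)" using geom[of y] by (simp add: diffs_def)
  qed (use that in auto)
  then have "summable (\<lambda>n. real (Suc n) * real (Suc (Suc n)) * t ^ n)"
    using assms by (simp add: diffs_def mult.commute mult.left_commute)
  then show ?thesis
  proof (rule summable_comparison_test')
    fix n :: nat
    have "real (n + 1) ^ 2 * t ^ n \<le> real (Suc n) * real (Suc (Suc n)) * t ^ n"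
      using assms by (intro mult_right_mono) (auto simp: power2_eq_square)
    then show "norm (real (n + 1) ^ 2 * t ^ n) \<le> real (Suc n) * real (Suc (Suc n)) * t ^ n"
      using assms by simp
  qed
qed

lemma radius_between:
  fixes t q :: real
  assumes "t * q < 1" and "0 \<le> t" and "0 < q"
  shows "\<exists>r. t < r \<and> 0 < r \<and> r * q < 1"
proof (intro exI conjI)
  show "t < (t + 1 / q) / 2" and "0 < (t + 1 / q) / 2" and "(t + 1 / q) / 2 * q < 1"
    using assms by (auto simp: field_simps add_pos_nonneg)
qed

lemma power_series_antiderivative:
  fixes a :: "nat \<Rightarrow> complex"
  assumes s: "0 < s" and a_le: "\<And>k. norm (a k) \<le> C * real (k + 1) ^ 2 * q ^ k"
    and q: "1 \<le> q" and zq: "cmod z * q < 1"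
  shows "((\<lambda>w. \<Sum>k. a k / of_nat (k + s) * w ^ (k + s))
          has_field_derivative (\<Sum>k. a k * z ^ (k + s - 1))) (at z)"
proof -
  obtain r where zr: "cmod z < r" and r0: "0 < r" and rq: "r * q < 1"
    using radius_between[OF zq] q by auto
  have C0: "0 \<le> C"
    using a_le[of 0] norm_ge_zero[of "a 0"] by (simp del: norm_ge_zero)
  show ?thesis
  proof (rule has_field_derivative_series'(2)[where S="ball 0 r"
      and f="\<lambda>k w. a k / of_nat (k + s) * w ^ (k + s)" and f'="\<lambda>k w. a k * w ^ (k + s - 1)"])
    fix n w
    have "((\<lambda>w. a n / of_nat (n + s) * w ^ (n + s)) has_field_derivative
            a n / of_nat (n + s) * (of_nat (n + s) * w ^ (n + s - 1))) (at w)"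
      by (auto intro!: derivative_eq_intros)
    moreover have "(of_nat (n + s) :: complex) \<noteq> 0"
      using s by (simp only: of_nat_eq_0_iff)
    then have "a n / of_nat (n + s) * (of_nat (n + s) * w ^ (n + s - 1)) = a n * w ^ (n + s - 1)"
      by simp
    ultimately show "((\<lambda>w. a n / of_nat (n + s) * w ^ (n + s)) has_field_derivative
        a n * w ^ (n + s - 1)) (at w within ball 0 r)"
      by (simp add: has_field_derivative_at_within)
  next
    show "uniformly_convergent_on (ball 0 r) (\<lambda>n w. \<Sum>i<n. a i * w ^ (i + s - 1))"
    proof (rule Weierstrass_m_test'
        [where M="\<lambda>k. (C * r ^ (s - 1)) * (real (k + 1) ^ 2 * (q * r) ^ k)"])
      fix n w
      assume "w \<in> ball (0::complex) r"
      then have wr: "cmod w \<le> r" by simp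
      have "norm (a n * w ^ (n + s - 1)) \<le> (C * real (n + 1) ^ 2 * q ^ n) * r ^ (n + s - 1)"
        unfolding norm_mult norm_power by (intro mult_mono a_le power_mono wr) (use C0 q in auto)
      also have "r ^ (n + s - 1) = r ^ n * r ^ (s - 1)" using s by (simp add: power_add[symmetric])
      finally show "norm (a n * w ^ (n + s - 1))
          \<le> (C * r ^ (s - 1)) * (real (n + 1) ^ 2 * (q * r) ^ n)"
        by (simp add: power_mult_distrib algebra_simps)
    next
      show "summable (\<lambda>k. (C * r ^ (s - 1)) * (real (k + 1) ^ 2 * (q * r) ^ k))"
        by (rule summable_mult, rule summable_square_times_geometric)
          (use q r0 rq in \<open>auto simp: mult.commute\<close>)
    qed
  next
    have "(\<lambda>k. a k / of_nat (k + s) * (0::complex) ^ (k + s)) = (\<lambda>k. 0)"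
      using s by (simp add: fun_eq_iff)
    then show "summable (\<lambda>k. a k / of_nat (k + s) * (0::complex) ^ (k + s))" by simp
  qed (use r0 zr in auto)
qed

lemma odd_power_tail_sums:
  fixes z c :: complex
  assumes "cmod z < 1"
  shows "(\<lambda>k. if 2 \<le> k \<and> odd k then c * z ^ k else 0) sums (c * z ^ 3 / (1 - z\<^sup>2))"
proof -
  let ?E = "\<lambda>k. if 2 \<le> k \<and> odd k then c * z ^ k else 0"
  have "cmod (z\<^sup>2) < 1" using assms by (simp add: norm_power abs_square_less_1)
  then have "(\<lambda>j. (c * z ^ 3) * (z\<^sup>2) ^ j) sums ((c * z ^ 3) * (1 / (1 - z\<^sup>2)))"
    by (intro sums_mult geometric_sums)
  moreover have "(\<lambda>j. (c * z ^ 3) * (z\<^sup>2) ^ j) = (\<lambda>j. ?E (2 * j + 3))"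
    by (auto simp: fun_eq_iff power_mult[symmetric] power_add mult.commute)
  ultimately have "(\<lambda>j. ?E (2 * j + 3)) sums (c * z ^ 3 / (1 - z\<^sup>2))" by simp
  moreover have "strict_mono (\<lambda>j::nat. 2 * j + 3)" by (rule strict_monoI) simp
  moreover have "?E k = 0" if "k \<notin> range (\<lambda>j::nat. 2 * j + 3)" for k
  proof (rule ccontr)
    assume "?E k \<noteq> 0"
    then have "2 \<le> k" "odd k" by (auto split: if_splits)
    then have "k = 2 * ((k - 3) div 2) + 3" by presburger
    then show False using that by blast
  qed
  ultimately show ?thesis using sums_mono_reindex[of "\<lambda>j. 2 * j + 3" ?E] by blast
qed

lemma ln_one_minus_square_has_derivative:
  fixes z :: complex
  assumes "cmod z < 1"
  shows "((\<lambda>w. ln (1 - w\<^sup>2)) has_field_derivative inverse (1 - z\<^sup>2) * (- (2 * z))) (at z)"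
proof (rule DERIV_chain2[where f=ln])
  have "Re (z\<^sup>2) \<le> cmod (z\<^sup>2)" by (rule complex_Re_le_cmod)
  also have "\<dots> < 1" using assms by (simp add: norm_power abs_square_less_1)
  finally have "1 - z\<^sup>2 \<notin> \<real>\<^sub>\<le>\<^sub>0" by (simp add: complex_nonpos_Reals_iff)
  then show "(ln has_field_derivative inverse (1 - z\<^sup>2)) (at (1 - z\<^sup>2))"
    by (rule has_field_derivative_Ln)
  show "((\<lambda>w. 1 - w\<^sup>2) has_field_derivative - (2 * z)) (at z)"
    by (auto intro!: derivative_eq_intros)
qed

section \<open>Geodesic paths and the recursion for \<open>C_op\<close>\<close>

lemma sum_filter_split:
  assumes "finite S"
  shows "(\<Sum>p\<in>S. h p) = (\<Sum>p\<in>{p\<in>S. P p}. h p) + (\<Sum>p\<in>{p\<in>S. \<not> P p}. h p)"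
proof -
  have "S = {p\<in>S. P p} \<union> {p\<in>S. \<not> P p}" by auto
  then show ?thesis
    by (metis (no_types, lifting) assms sum.union_disjoint finite_Un disjoint_iff mem_Collect_eq)
qed

lemma sum_last_image_Cons:
  assumes "\<And>p. p \<in> S \<Longrightarrow> p \<noteq> []"
  shows "(\<Sum>p\<in>(\<lambda>p. x # p) ` S. g (last p)) = (\<Sum>p\<in>S. g (last p))"
  using assms by (subst sum.reindex) (auto intro!: sum.cong)

fun T_op :: "('v \<Rightarrow> 'v \<Rightarrow> bool) \<Rightarrow> nat \<Rightarrow> 'v op" where
  "T_op adj 0 g = g"
| "T_op adj (Suc 0) g = A_op adj g"
| "T_op adj (Suc (Suc m)) g = (\<lambda>x. A_op adj (T_op adj (Suc m) g) x - Q_op adj (T_op adj m g) x)"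

abbreviation geopaths_avoid :: "('v \<Rightarrow> 'v \<Rightarrow> bool) \<Rightarrow> nat \<Rightarrow> 'v \<Rightarrow> 'v \<Rightarrow> 'v list set" where
  "geopaths_avoid adj m y x \<equiv> {p \<in> geopaths adj m y. 1 \<le> m \<longrightarrow> p ! 1 \<noteq> x}"

locale bounded_degree_graph =
  fixes adj :: "'v \<Rightarrow> 'v \<Rightarrow> bool" and M :: nat
  assumes adj_sym: "adj x y \<Longrightarrow> adj y x"
    and finite_nbrs: "finite (nbrs adj x)"
    and deg_le_M: "deg adj x \<le> M"
    and M_ge_1: "1 \<le> M"
begin

lemma geopaths_0: "geopaths adj 0 x = {[x]}"
  unfolding geopaths_def by (auto simp: length_Suc_conv)

lemma geopaths_Suc: "geopaths adj (Suc m) x =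
   (\<Union>y\<in>nbrs adj x. (\<lambda>p. x # p) ` geopaths_avoid adj m y x)"
proof (intro equalityI subsetI)
  fix p assume p: "p \<in> geopaths adj (Suc m) x"
  then obtain q where pq: "p = x # q" and lq: "length q = Suc m"
    unfolding geopaths_def by (cases p) auto
  have adjs: "\<forall>i<Suc m. adj (p ! i) (p ! Suc i)"
    and nb: "\<forall>i. Suc (Suc i) \<le> Suc m \<longrightarrow> p ! Suc (Suc i) \<noteq> p ! i"
    using p unfolding geopaths_def by auto
  have "adj x (q ! 0)" using adjs[rule_format, of 0] pq by simp
  moreover have "q \<in> geopaths adj m (q ! 0)"
    unfolding geopaths_def using lq adjs nb pq
    by (auto simp del: nth_Cons_Suc)
  moreover have "1 \<le> m \<longrightarrow> q ! 1 \<noteq> x" using nb[rule_format, of 0] pq by auto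
  ultimately show "p \<in> (\<Union>y\<in>nbrs adj x. (\<lambda>p. x # p) ` geopaths_avoid adj m y x)"
    using pq unfolding nbrs_def by blast
next
  fix p assume "p \<in> (\<Union>y\<in>nbrs adj x. (\<lambda>p. x # p) ` geopaths_avoid adj m y x)"
  then obtain y q where y: "adj x y" and pq: "p = x # q" and q: "q \<in> geopaths adj m y"
    and c: "1 \<le> m \<longrightarrow> q ! 1 \<noteq> x"
    unfolding nbrs_def by blast
  have lq: "length q = Suc m" and q0: "q ! 0 = y" and qa: "\<forall>i<m. adj (q ! i) (q ! Suc i)"
    and qn: "\<forall>i. Suc (Suc i) \<le> m \<longrightarrow> q ! Suc (Suc i) \<noteq> q ! i"
    using q unfolding geopaths_def by auto
  have "\<forall>i<Suc m. adj (p ! i) (p ! Suc i)"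
  proof (intro allI impI)
    fix i assume "i < Suc m"
    then show "adj (p ! i) (p ! Suc i)" using y q0 qa pq by (cases i) auto
  qed
  moreover have "\<forall>i. Suc (Suc i) \<le> Suc m \<longrightarrow> p ! Suc (Suc i) \<noteq> p ! i"
  proof (intro allI impI)
    fix i assume "Suc (Suc i) \<le> Suc m"
    then show "p ! Suc (Suc i) \<noteq> p ! i" using c qn pq q0 by (cases i) auto
  qed
  ultimately show "p \<in> geopaths adj (Suc m) x" unfolding geopaths_def using pq lq by auto
qed

lemma finite_geopaths: "finite (geopaths adj m x)"
proof (induction m arbitrary: x)
  case 0 then show ?case by (simp add: geopaths_0)
next
  case (Suc m) then show ?case by (simp add: geopaths_Suc finite_nbrs)
qed

lemma geopaths_nonempty: "p \<in> geopaths adj m x \<Longrightarrow> p \<noteq> []"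
  unfolding geopaths_def by auto

lemma card_geopaths_le: "card (geopaths adj m x) \<le> M ^ m"
proof (induction m arbitrary: x)
  case 0 then show ?case by (simp add: geopaths_0)
next
  case (Suc m)
  have "card (geopaths adj (Suc m) x)
      \<le> (\<Sum>y\<in>nbrs adj x. card ((\<lambda>p. x # p) ` geopaths_avoid adj m y x))"
    unfolding geopaths_Suc by (rule card_UN_le) (rule finite_nbrs)
  also have "\<dots> \<le> (\<Sum>y\<in>nbrs adj x. M ^ m)"
  proof (rule sum_mono)
    fix y
    have "card ((\<lambda>p. x # p) ` geopaths_avoid adj m y x) \<le> card (geopaths_avoid adj m y x)"
      by (rule card_image_le) (simp add: finite_geopaths)
    also have "\<dots> \<le> card (geopaths adj m y)" by (rule card_mono) (auto simp: finite_geopaths)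
    finally show "card ((\<lambda>p. x # p) ` geopaths_avoid adj m y x) \<le> M ^ m"
      using Suc.IH[of y] by linarith
  qed
  also have "\<dots> = deg adj x * M ^ m" by (simp add: deg_def)
  also have "\<dots> \<le> M * M ^ m" using deg_le_M by simp
  finally show ?case by simp
qed

lemma C_op_0: "C_op adj 0 g x = g x"
  by (simp add: C_op_def geopaths_0)

lemma C_op_Suc: "C_op adj (Suc m) g x =
   (\<Sum>y\<in>nbrs adj x. \<Sum>p\<in>geopaths_avoid adj m y x. g (last p))"
proof -
  have "C_op adj (Suc m) g x
      = (\<Sum>y\<in>nbrs adj x. \<Sum>p\<in>(\<lambda>p. x # p) ` geopaths_avoid adj m y x. g (last p))"
    unfolding C_op_def geopaths_Suc
  proof (rule sum.UNION_disjoint)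
    show "finite (nbrs adj x)" by (rule finite_nbrs)
    show "\<forall>i\<in>nbrs adj x. finite ((\<lambda>p. x # p) ` geopaths_avoid adj m i x)"
      by (simp add: finite_geopaths)
    show "\<forall>i\<in>nbrs adj x. \<forall>j\<in>nbrs adj x. i \<noteq> j \<longrightarrow>
       (\<lambda>p. x # p) ` geopaths_avoid adj m i x \<inter>
       (\<lambda>p. x # p) ` geopaths_avoid adj m j x = {}"
      unfolding geopaths_def by auto
  qed
  also have "\<dots> = (\<Sum>y\<in>nbrs adj x. \<Sum>p\<in>geopaths_avoid adj m y x. g (last p))"
    by (intro sum.cong refl sum_last_image_Cons) (auto dest: geopaths_nonempty)
  finally show ?thesis .
qed

lemma C_op_1: "C_op adj (Suc 0) g = A_op adj g"
  using C_op_Suc[of 0 g] by (simp add: fun_eq_iff geopaths_0 A_op_def)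

lemma geopaths_Suc_through:
  assumes "y \<in> nbrs adj x"
  shows "{p \<in> geopaths adj (Suc m) y. p ! 1 = x} = (\<lambda>q. y # q) ` geopaths_avoid adj m x y"
proof -
  have xy: "x \<in> nbrs adj y" using assms adj_sym unfolding nbrs_def by auto
  show ?thesis
    unfolding geopaths_Suc[of m y]
    using xy by (auto simp: geopaths_def)
qed

lemma C_op_Suc_Suc_count: "C_op adj (Suc (Suc m)) g x = A_op adj (C_op adj (Suc m) g) x
   - (\<Sum>q\<in>geopaths adj m x. g (last q) * of_nat (card {y\<in>nbrs adj x. 1 \<le> m \<longrightarrow> q ! 1 \<noteq> y}))"
proof -
  have step: "(\<Sum>p\<in>geopaths_avoid adj (Suc m) y x. g (last p))
     = C_op adj (Suc m) g y - (\<Sum>q\<in>geopaths_avoid adj m x y. g (last q))"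
    if y: "y \<in> nbrs adj x" for y
  proof -
    have "C_op adj (Suc m) g y = (\<Sum>p\<in>{p \<in> geopaths adj (Suc m) y. p ! 1 = x}. g (last p))
       + (\<Sum>p\<in>{p \<in> geopaths adj (Suc m) y. \<not> p ! 1 = x}. g (last p))"
      unfolding C_op_def by (rule sum_filter_split) (rule finite_geopaths)
    also have "(\<Sum>p\<in>{p \<in> geopaths adj (Suc m) y. p ! 1 = x}. g (last p))
       = (\<Sum>q\<in>geopaths_avoid adj m x y. g (last q))"
      unfolding geopaths_Suc_through[OF y]
      by (rule sum_last_image_Cons) (auto dest: geopaths_nonempty)
    finally show ?thesis by simp
  qed
  have "C_op adj (Suc (Suc m)) g x
      = (\<Sum>y\<in>nbrs adj x. C_op adj (Suc m) g y - (\<Sum>q\<in>geopaths_avoid adj m x y. g (last q)))"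
    unfolding C_op_Suc[of "Suc m"] using step by (intro sum.cong) auto
  also have "\<dots> = A_op adj (C_op adj (Suc m) g) x
      - (\<Sum>y\<in>nbrs adj x. \<Sum>q\<in>geopaths_avoid adj m x y. g (last q))"
    by (simp add: sum_subtractf A_op_def)
  also have "(\<Sum>y\<in>nbrs adj x. \<Sum>q\<in>geopaths_avoid adj m x y. g (last q))
     = (\<Sum>y\<in>nbrs adj x. \<Sum>q\<in>geopaths adj m x. if 1 \<le> m \<longrightarrow> q ! 1 \<noteq> y then g (last q) else 0)"
    by (intro sum.cong refl sum.inter_filter finite_geopaths)
  also have "\<dots> = (\<Sum>q\<in>geopaths adj m x. \<Sum>y\<in>nbrs adj x. if 1 \<le> m \<longrightarrow> q ! 1 \<noteq> y then g (last q) else 0)"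
    by (rule sum.swap)
  also have "\<dots> = (\<Sum>q\<in>geopaths adj m x.
      g (last q) * of_nat (card {y\<in>nbrs adj x. 1 \<le> m \<longrightarrow> q ! 1 \<noteq> y}))"
    by (intro sum.cong refl) (simp add: sum.inter_filter[symmetric] finite_nbrs)
  finally show ?thesis .
qed

lemma C_op_2: "C_op adj 2 g x = A_op adj (A_op adj g) x - of_nat (deg adj x) * g x"
  using C_op_Suc_Suc_count[of 0 g x]
    by (simp add: C_op_1 geopaths_0 deg_def numeral_2_eq_2 mult.commute)

lemma C_op_Suc_Suc: "1 \<le> m \<Longrightarrow> C_op adj (Suc (Suc m)) g x = A_op adj (C_op adj (Suc m) g) x
   - Q_op adj (C_op adj m g) x"
proof -
  assume m: "1 \<le> m"
  have "g (last q) * of_nat (card {y\<in>nbrs adj x. 1 \<le> m \<longrightarrow> q ! 1 \<noteq> y})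
      = g (last q) * (of_nat (deg adj x) - 1)"
    if q: "q \<in> geopaths adj m x" for q
  proof -
    have "adj (q ! 0) (q ! 1)" "q ! 0 = x" using q m unfolding geopaths_def by auto
    then have q1: "q ! 1 \<in> nbrs adj x" unfolding nbrs_def by auto
    have "{y\<in>nbrs adj x. 1 \<le> m \<longrightarrow> q ! 1 \<noteq> y} = nbrs adj x - {q ! 1}" using m by auto
    then have "card {y\<in>nbrs adj x. 1 \<le> m \<longrightarrow> q ! 1 \<noteq> y} = deg adj x - 1"
      using q1 finite_nbrs by (simp add: deg_def card_Diff_singleton)
    moreover have "deg adj x \<ge> 1" using q1 finite_nbrs unfolding deg_def
      by (metis One_nat_def Suc_leI card_gt_0_iff empty_iff)
    ultimately show ?thesis by (simp add: of_nat_diff)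
  qed
  then have "(\<Sum>q\<in>geopaths adj m x. g (last q) * of_nat (card {y\<in>nbrs adj x. 1 \<le> m \<longrightarrow> q ! 1 \<noteq> y}))
     = (\<Sum>q\<in>geopaths adj m x. g (last q) * (of_nat (deg adj x) - 1))"
    by (intro sum.cong) auto
  also have "\<dots> = (\<Sum>q\<in>geopaths adj m x. g (last q)) * (of_nat (deg adj x) - 1)"
    by (simp add: sum_distrib_right)
  finally have e: "(\<Sum>q\<in>geopaths adj m x.
      g (last q) * of_nat (card {y\<in>nbrs adj x. 1 \<le> m \<longrightarrow> q ! 1 \<noteq> y}))
     = (\<Sum>q\<in>geopaths adj m x. g (last q)) * (of_nat (deg adj x) - 1)" .
  show ?thesis unfolding C_op_Suc_Suc_count[of m g x] e Q_op_def D_op_def C_op_def[of adj m g x]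
    by (simp add: algebra_simps)
qed

lemma C_op_eq_T_op:
  "C_op adj m g = (if m < 2 then T_op adj m g else (\<lambda>x. T_op adj m g x - T_op adj (m - 2) g x))"
proof (induction m rule: less_induct)
  case (less m)
  have "m = 0 \<or> m = 1 \<or> m = 2 \<or> m = 3 \<or> m = Suc (Suc (Suc (Suc (m - 4))))" by auto
  then consider "m = 0" | "m = 1" | "m = 2" | "m = 3" | k where "m = Suc (Suc (Suc (Suc k)))"
    by blast
  then show ?case
  proof cases
    case 1 then show ?thesis by (auto simp: C_op_0)
  next
    case 2 then show ?thesis by (auto simp: C_op_1)
  next
    case 3
    have "C_op adj 2 g x = T_op adj 2 g x - g x" for x
      using C_op_2[of g x] by (simp add: Q_op_def D_op_def numeral_2_eq_2)
    then show ?thesis using 3 by auto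
  next
    case 4
    have c2: "C_op adj (Suc (Suc 0)) g = (\<lambda>x. T_op adj 2 g x - g x)" using less[of 2] 4
      by (auto simp: numeral_2_eq_2)
    have "C_op adj (Suc (Suc 1)) g x = A_op adj (C_op adj 2 g) x - Q_op adj (C_op adj 1 g) x" for x
      using C_op_Suc_Suc[of 1 g x] by (simp add: numeral_2_eq_2)
    then have "C_op adj 3 g x = A_op adj (T_op adj 2 g) x - A_op adj g x
        - Q_op adj (A_op adj g) x" for x
      by (simp add: c2 C_op_1 op_linear_diff[OF op_linear_A_op] numeral_2_eq_2 numeral_3_eq_3)
    then show ?thesis using 4
      by (auto simp: numeral_2_eq_2 numeral_3_eq_3)
  next
    case 5
    have a: "C_op adj (Suc (Suc (Suc k))) g
        = (\<lambda>x. T_op adj (Suc (Suc (Suc k))) g x - T_op adj (Suc k) g x)"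
      using less[of "Suc (Suc (Suc k))"] 5 by auto
    have b: "C_op adj (Suc (Suc k)) g = (\<lambda>x. T_op adj (Suc (Suc k)) g x - T_op adj k g x)"
      using less[of "Suc (Suc k)"] 5 by auto
    have "C_op adj m g x = T_op adj m g x - T_op adj (m - 2) g x" for x
      using C_op_Suc_Suc[of "Suc (Suc k)" g x] 5
      by (simp add: a b op_linear_diff[OF op_linear_A_op] op_linear_diff[OF op_linear_Q_op])
    then show ?thesis using 5 by auto
  qed
qed

lemma sum_C_op_eq_T_op: "2 \<le> m \<Longrightarrow> (\<Sum>j=1..m div 2. C_op adj (m - 2*j) g y) = T_op adj (m - 2) g y"
proof (induction m rule: less_induct)
  case (less m)
  show ?case
  proof (cases "m < 4")
    case True
    then have "m = 2 \<or> m = 3" using less.prems by auto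
    then show ?thesis by (auto simp: C_op_eq_T_op)
  next
    case False
    have "(\<Sum>j=1..m div 2. C_op adj (m - 2*j) g y)
        = C_op adj (m - 2) g y + (\<Sum>j=Suc 1..m div 2. C_op adj (m - 2*j) g y)"
      using False by (subst sum.atLeast_Suc_atMost) auto
    also have "(\<Sum>j=Suc 1..m div 2. C_op adj (m - 2*j) g y)
        = (\<Sum>j=1..(m - 2) div 2. C_op adj (m - 2 - 2*j) g y)"
    proof -
      have "m div 2 = Suc ((m - 2) div 2)" using False by auto
      then have "(\<Sum>j=Suc 1..m div 2. C_op adj (m - 2*j) g y)
          = (\<Sum>j=1..(m-2) div 2. C_op adj (m - 2*Suc j) g y)"
        by (simp only: sum.shift_bounds_cl_Suc_ivl)
      then show ?thesis by (simp add: algebra_simps)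
    qed
    also have "\<dots> = T_op adj (m - 2 - 2) g y" using less.IH[of "m - 2"] False by auto
    finally show ?thesis using False by (auto simp: C_op_eq_T_op)
  qed
qed

lemma B_op_eq_T_op: "3 \<le> m \<Longrightarrow> B_op adj m g x = T_op adj m g x - Q_op adj (T_op adj (m - 2) g) x"
proof -
  assume m: "3 \<le> m"
  have "(\<lambda>y. \<Sum>j=1..m div 2. C_op adj (m - 2*j) g y) = T_op adj (m - 2) g"
    using sum_C_op_eq_T_op m by auto
  then have "B_op adj m g x = C_op adj m g x - (Q_op adj (T_op adj (m-2) g) x - T_op adj (m-2) g x)"
    using m unfolding B_op_def by (simp add: fun_eq_iff)
  then show ?thesis using m by (simp add: C_op_eq_T_op)
qed

lemma B_op_1: "B_op adj 1 g x = T_op adj 1 g x"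
  by (simp add: B_op_def C_op_1)
lemma B_op_2: "B_op adj 2 g x = T_op adj 2 g x - g x"
  by (simp add: B_op_def C_op_eq_T_op)

end

section \<open>Growth bounds\<close>

definition growth_rate :: "nat \<Rightarrow> real" where
  "growth_rate M = (real M + sqrt (real M ^ 2 + 4 * real M)) / 2"

lemma growth_rate_square: "growth_rate M * growth_rate M = real M * growth_rate M + real M"
proof -
  have "(sqrt (real M ^ 2 + 4 * real M))\<^sup>2 = real M ^ 2 + 4 * real M" by simp
  then show ?thesis unfolding growth_rate_def power2_eq_square by (simp add: field_simps)
qed

lemma growth_rate_ge: "real M \<le> growth_rate M"
proof -
  have "real M \<le> sqrt (real M ^ 2 + 4 * real M)"
    by (rule real_le_rsqrt) simp
  then show ?thesis unfolding growth_rate_def by simp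
qed

context bounded_degree_graph
begin

abbreviation "\<alpha> \<equiv> growth_rate M"

lemma alpha_ge_1: "1 \<le> \<alpha>" using growth_rate_ge[of M] M_ge_1 by simp
lemma M_le_alpha: "real M \<le> \<alpha>" by (rule growth_rate_ge)

lemma real_deg_le: "real (deg adj x) \<le> real M" using deg_le_M by simp

abbreviation f_bound :: "complex \<Rightarrow> real" where
  "f_bound z \<equiv> real M * cmod z + real M * cmod z ^ 2"

lemma norm_A_op_le:
  assumes "\<And>y. norm (h y) \<le> K"
  shows "norm (A_op adj h x) \<le> real M * K"
proof -
  have K: "0 \<le> K" using assms[of x] norm_ge_zero order_trans by blast
  have "norm (A_op adj h x) \<le> (\<Sum>y\<in>nbrs adj x. norm (h y))" unfolding A_op_def by (rule norm_sum)
  also have "\<dots> \<le> (\<Sum>y\<in>nbrs adj x. K)" by (rule sum_mono) (rule assms)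
  also have "\<dots> = real (deg adj x) * K" by (simp add: deg_def)
  also have "\<dots> \<le> real M * K" using real_deg_le K by (simp add: mult_right_mono)
  finally show ?thesis .
qed

lemma norm_deg_minus_1_le: "norm (of_nat (deg adj x) - (1::complex)) \<le> real M"
proof (cases "deg adj x = 0")
  case True then show ?thesis using M_ge_1 by simp
next
  case False
  then have "of_nat (deg adj x) - (1::complex) = of_nat (deg adj x - 1)" by (simp add: of_nat_diff)
  moreover have "real (deg adj x - 1) \<le> real M" using deg_le_M[of x] by simp
  ultimately show ?thesis by (simp only: norm_of_nat)
qed

lemma norm_Q_op_le:
  assumes "\<And>y. norm (h y) \<le> K"
  shows "norm (Q_op adj h x) \<le> real M * K"
proof -
  have K: "0 \<le> K" using assms[of x] norm_ge_zero order_trans by blast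
  have "Q_op adj h x = (of_nat (deg adj x) - 1) * h x"
    unfolding Q_op_def D_op_def by (simp add: algebra_simps)
  then have "norm (Q_op adj h x) = norm (of_nat (deg adj x) - (1::complex)) * norm (h x)"
    by (simp add: norm_mult)
  also have "\<dots> \<le> real M * K" by (rule mult_mono[OF norm_deg_minus_1_le assms]) (use K in auto)
  finally show ?thesis .
qed

lemma norm_T_op_le:
  assumes g: "\<And>y. norm (g y) \<le> 1"
  shows "norm (T_op adj m g x) \<le> \<alpha> ^ m"
proof (induction m arbitrary: x rule: less_induct)
  case (less m)
  have "m = 0 \<or> m = 1 \<or> m = Suc (Suc (m - 2))" by auto
  then consider "m = 0" | "m = 1" | k where "m = Suc (Suc k)" by blast
  then show ?case
  proof cases
    case 1 then show ?thesis using g by simp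
  next
    case 2 then show ?thesis using norm_A_op_le[of g 1 x] g M_le_alpha by simp
  next
    case 3
    have a: "norm (A_op adj (T_op adj (Suc k) g) x) \<le> real M * \<alpha> ^ Suc k"
      by (rule norm_A_op_le) (rule less.IH, use 3 in auto)
    have b: "norm (Q_op adj (T_op adj k g) x) \<le> real M * \<alpha> ^ k"
      by (rule norm_Q_op_le) (rule less.IH, use 3 in auto)
    have "norm (T_op adj m g x) \<le> real M * \<alpha> ^ Suc k + real M * \<alpha> ^ k"
      using 3 a b
        norm_triangle_ineq4[of "A_op adj (T_op adj (Suc k) g) x" "Q_op adj (T_op adj k g) x"]
      by simp
    also have "\<dots> = \<alpha> ^ k * (real M * \<alpha> + real M)" by (simp add: algebra_simps)
    also have "\<dots> = \<alpha> ^ k * (\<alpha> * \<alpha>)" using growth_rate_square by simp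
    also have "\<dots> = \<alpha> ^ m" using 3 by (simp add: algebra_simps)
    finally show ?thesis .
  qed
qed

lemma norm_f_op_le:
  assumes "\<And>y. norm (h y) \<le> K"
  shows "norm (f_op adj z h x) \<le> f_bound z * K"
proof -
  have "norm (f_op adj z h x) \<le> norm (A_op adj h x) * cmod z + norm (Q_op adj h x) * cmod z ^ 2"
    unfolding f_op_def using norm_triangle_ineq4[of "A_op adj h x * z" "Q_op adj h x * z\<^sup>2"]
    by (simp add: norm_mult norm_power)
  also have "\<dots> \<le> (real M * K) * cmod z + (real M * K) * cmod z ^ 2"
    by (intro add_mono mult_right_mono norm_A_op_le norm_Q_op_le assms) auto
  finally show ?thesis by (simp add: algebra_simps)
qed

lemma norm_df_op_le:
  assumes "\<And>y. norm (h y) \<le> K"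
  shows "norm (df_op adj z h x) \<le> (real M + 2 * cmod z * real M) * K"
proof -
  have "norm (df_op adj z h x) \<le> norm (A_op adj h x) + 2 * cmod z * norm (Q_op adj h x)"
    unfolding df_op_def using norm_triangle_ineq4[of "A_op adj h x" "2 * z * Q_op adj h x"]
    by (simp add: norm_mult)
  also have "\<dots> \<le> (real M * K) + 2 * cmod z * (real M * K)"
    by (intro add_mono mult_left_mono norm_A_op_le norm_Q_op_le assms) auto
  finally show ?thesis by (simp add: algebra_simps)
qed

lemma norm_f_op_power_le:
  assumes "\<And>y. norm (h y) \<le> K"
  shows "norm ((f_op adj z ^^ n) h x) \<le> f_bound z ^ n * K"
proof (induction n arbitrary: x)
  case 0 then show ?case using assms by simp
next
  case (Suc n)
  have "norm (f_op adj z ((f_op adj z ^^ n) h) x) \<le> f_bound z * (f_bound z ^ n * K)"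
    by (rule norm_f_op_le) (rule Suc.IH)
  then show ?case by (simp add: algebra_simps)
qed

lemma norm_c_loops_le: "norm (c_loops adj k x) \<le> \<alpha> ^ k"
proof -
  have "card {p\<in>geopaths adj k x. last p = x} \<le> card (geopaths adj k x)"
    by (rule card_mono) (auto simp: finite_geopaths)
  also have "\<dots> \<le> M ^ k" by (rule card_geopaths_le)
  finally have "real (card {p\<in>geopaths adj k x. last p = x}) \<le> real M ^ k"
    by (metis of_nat_le_iff of_nat_power)
  also have "\<dots> \<le> \<alpha> ^ k" by (rule power_mono[OF M_le_alpha]) simp
  finally show ?thesis unfolding c_loops_def by (simp only: norm_of_nat)
qed

lemma norm_Delta_c_loops_le: "norm (Delta_op adj (c_loops adj k) x) \<le> 2 * real M * \<alpha> ^ k"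
proof -
  have "norm (Delta_op adj (c_loops adj k) x)
      \<le> norm (D_op adj (c_loops adj k) x) + norm (A_op adj (c_loops adj k) x)"
    unfolding Delta_op_def by (rule norm_triangle_ineq4)
  also have "norm (D_op adj (c_loops adj k) x) \<le> real M * \<alpha> ^ k"
    unfolding D_op_def norm_mult norm_of_nat
    by (intro mult_mono real_deg_le norm_c_loops_le) auto
  also have "norm (A_op adj (c_loops adj k) x) \<le> real M * \<alpha> ^ k"
    by (rule norm_A_op_le) (rule norm_c_loops_le)
  finally show ?thesis by simp
qed

lemma norm_R_op_multiplier_le:
  "norm (\<Sum>j=1..(m + 1) div 2 - 1. of_nat j * Delta_op adj (c_loops adj (m - 2 * j)) x)
     \<le> 2 * real M * real m ^ 2 * \<alpha> ^ m"
proof -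
  let ?n = "(m + 1) div 2 - 1"
  have "norm (of_nat j * Delta_op adj (c_loops adj (m - 2 * j)) x) \<le> real m * (2 * real M * \<alpha> ^ m)"
    if j: "j \<in> {1..?n}" for j
  proof -
    have "2 * real M * \<alpha> ^ (m - 2 * j) \<le> 2 * real M * \<alpha> ^ m"
      using alpha_ge_1 by (intro mult_left_mono power_increasing) auto
    then have "norm (Delta_op adj (c_loops adj (m - 2 * j)) x) \<le> 2 * real M * \<alpha> ^ m"
      using norm_Delta_c_loops_le[of "m - 2 * j" x] by linarith
    moreover have "real j \<le> real m" using j by auto
    ultimately show ?thesis unfolding norm_mult norm_of_nat by (intro mult_mono) auto
  qed
  then have "norm (\<Sum>j=1..?n. of_nat j * Delta_op adj (c_loops adj (m - 2 * j)) x)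
      \<le> real ?n * (real m * (2 * real M * \<alpha> ^ m))"
    by (intro order_trans[OF norm_sum] order_trans[OF sum_bounded_above]) auto
  also have "\<dots> \<le> real m * (real m * (2 * real M * \<alpha> ^ m))"
    using alpha_ge_1 by (intro mult_right_mono) auto
  finally show ?thesis by (simp add: power2_eq_square algebra_simps)
qed

lemma norm_R_op_le:
  assumes g: "\<And>y. norm (g y) \<le> 1"
  shows "norm (R_op adj m g x) \<le> 2 * real M * real m ^ 2 * \<alpha> ^ m"
proof (cases "m \<le> 2")
  case False
  have "norm (R_op adj m g x)
      = norm (\<Sum>j=1..(m + 1) div 2 - 1. of_nat j * Delta_op adj (c_loops adj (m - 2 * j)) x)
        * norm (g x)"
    using False by (simp add: R_op_def norm_mult)
  also have "\<dots> \<le> 2 * real M * real m ^ 2 * \<alpha> ^ m * 1"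
    using alpha_ge_1 by (intro mult_mono norm_R_op_multiplier_le g) auto
  finally show ?thesis by simp
qed (use alpha_ge_1 in \<open>simp add: R_op_def\<close>)

lemma norm_B_op_le:
  assumes g: "\<And>y. norm (g y) \<le> 1" and m: "1 \<le> m"
  shows "norm (B_op adj m g x) \<le> 2 * \<alpha> ^ m"
proof -
  have "m = 1 \<or> m = 2 \<or> 3 \<le> m" using m by auto
  then consider "m = 1" | "m = 2" | "3 \<le> m" by blast
  then show ?thesis
  proof cases
    case 1
    have "norm (T_op adj 1 g x) \<le> \<alpha> ^ 1" by (rule norm_T_op_le[OF g])
    then show ?thesis using 1 B_op_1[of g x] alpha_ge_1 by simp
  next
    case 2
    have "norm (B_op adj m g x) \<le> norm (T_op adj 2 g x) + norm (g x)"
      using 2 B_op_2[of g x] norm_triangle_ineq4 by metis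
    also have "\<dots> \<le> \<alpha> ^ 2 + 1" by (intro add_mono norm_T_op_le g)
    also have "\<dots> \<le> 2 * \<alpha> ^ m"
    proof -
      have "1 \<le> \<alpha> ^ 2" using alpha_ge_1 by simp
      then show ?thesis using 2 by simp
    qed
    finally show ?thesis .
  next
    case 3
    have "norm (B_op adj m g x) \<le> norm (T_op adj m g x) + norm (Q_op adj (T_op adj (m - 2) g) x)"
      using 3 B_op_eq_T_op[of m g x] norm_triangle_ineq4 by metis
    also have "\<dots> \<le> \<alpha> ^ m + real M * \<alpha> ^ (m - 2)"
      by (intro add_mono norm_T_op_le g norm_Q_op_le)
    also have "real M * \<alpha> ^ (m - 2) \<le> (\<alpha> * \<alpha>) * \<alpha> ^ (m - 2)"
    proof (rule mult_right_mono)
      have "\<alpha> * 1 \<le> \<alpha> * \<alpha>" using alpha_ge_1 by (intro mult_left_mono) auto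
      then show "real M \<le> \<alpha> * \<alpha>" using M_le_alpha by simp
      show "0 \<le> \<alpha> ^ (m - 2)" using alpha_ge_1 by simp
    qed
    also have "(\<alpha> * \<alpha>) * \<alpha> ^ (m - 2) = \<alpha> ^ m"
    proof -
      have "m = Suc (Suc (m - 2))" using 3 by auto
      then have "\<alpha> ^ m = \<alpha> ^ Suc (Suc (m - 2))" by simp
      then show ?thesis by simp
    qed
    finally show ?thesis by simp
  qed
qed
section \<open>Generating functions and their derivatives\<close>

lemma f_op_has_derivative:
  assumes "\<And>y. ((\<lambda>z. H z y) has_field_derivative H' y) (at z0)"
  shows "((\<lambda>z. f_op adj z (H z) x)
          has_field_derivative (df_op adj z0 (H z0) x + f_op adj z0 H' x)) (at z0)"
proof -
  have dA: "((\<lambda>z. A_op adj (H z) x) has_field_derivative A_op adj H' x) (at z0)"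
    unfolding A_op_def by (rule DERIV_sum) (rule assms)
  have dQ: "((\<lambda>z. Q_op adj (H z) x) has_field_derivative Q_op adj H' x) (at z0)"
    unfolding Q_op_def D_op_def by (auto intro!: derivative_eq_intros assms)
  note DERIV_diff[OF DERIV_mult[OF dA DERIV_ident]
      DERIV_mult[OF dQ DERIV_power[OF DERIV_ident, of 2]]]
  then show ?thesis unfolding f_op_def df_op_def
    by (rule DERIV_cong) (simp add: algebra_simps power2_eq_square)
qed

lemma f_op_power_has_derivative: "((\<lambda>z. (f_op adj z ^^ n) g x) has_field_derivative
   (\<Sum>i<n. (f_op adj z0 ^^ i) (df_op adj z0 ((f_op adj z0 ^^ (n - 1 - i)) g)) x)) (at z0)"
proof (induction n arbitrary: x)
  case 0 then show ?case by simp
next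
  case (Suc n)
  let ?H' = "\<lambda>y. \<Sum>i<n. (f_op adj z0 ^^ i) (df_op adj z0 ((f_op adj z0 ^^ (n - 1 - i)) g)) y"
  have "((\<lambda>z. f_op adj z ((f_op adj z ^^ n) g) x) has_field_derivative
     (df_op adj z0 ((f_op adj z0 ^^ n) g) x + f_op adj z0 ?H' x)) (at z0)"
    by (rule f_op_has_derivative) (rule Suc.IH)
  moreover have "df_op adj z0 ((f_op adj z0 ^^ n) g) x + f_op adj z0 ?H' x
     = (\<Sum>i<Suc n. (f_op adj z0 ^^ i) (df_op adj z0 ((f_op adj z0 ^^ (Suc n - 1 - i)) g)) x)"
    by (simp only: op_linear_sum[OF op_linear_f_op finite_lessThan] sum.lessThan_Suc_shift) simp
  ultimately show ?case by simp
qed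

lemma A_op_sums: "(\<And>y. (\<lambda>n. h n y) sums H y) \<Longrightarrow> (\<lambda>n. A_op adj (h n) x) sums A_op adj H x"
  unfolding A_op_def by (rule sums_sum)

lemma Q_op_sums: "(\<And>y. (\<lambda>n. h n y) sums H y) \<Longrightarrow> (\<lambda>n. Q_op adj (h n) x) sums Q_op adj H x"
  unfolding Q_op_def D_op_def by (intro sums_diff sums_mult)

lemma f_op_sums: "(\<And>y. (\<lambda>n. h n y) sums H y) \<Longrightarrow> (\<lambda>n. f_op adj z (h n) x) sums f_op adj z H x"
  unfolding f_op_def by (intro sums_diff sums_mult2 A_op_sums Q_op_sums)

lemma df_op_sums: "(\<And>y. (\<lambda>n. h n y) sums H y) \<Longrightarrow> (\<lambda>n. df_op adj z (h n) x) sums df_op adj z H x"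
  unfolding df_op_def by (intro sums_diff sums_mult A_op_sums Q_op_sums)

lemma f_bound_less_1:
  assumes "cmod z * \<alpha> < 1"
  shows "f_bound z < 1"
proof -
  have \<alpha>0: "0 < \<alpha>" using alpha_ge_1 by simp
  have z: "cmod z < 1 / \<alpha>" using assms \<alpha>0 by (simp add: field_simps)
  have "real M * cmod z < real M * (1 / \<alpha>)"
    using z M_ge_1 by (intro mult_strict_left_mono) auto
  moreover have "real M * cmod z ^ 2 \<le> real M * (1 / \<alpha>) ^ 2"
    using z by (intro mult_left_mono power_mono) auto
  moreover have "real M * (1 / \<alpha>) + real M * (1 / \<alpha>) ^ 2 = (real M * \<alpha> + real M) / (\<alpha> * \<alpha>)"
    using \<alpha>0 by (simp add: field_simps power2_eq_square)
  then have "real M * (1 / \<alpha>) + real M * (1 / \<alpha>) ^ 2 = 1"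
    using growth_rate_square[of M] \<alpha>0 by (metis divide_self less_irrefl mult_pos_pos)
  ultimately show ?thesis by linarith
qed

lemma bounded_fixed_point_eq_0:
  assumes K: "\<And>y. norm (W y) \<le> K" and fx: "\<And>y. W y = f_op adj z W y" and r: "f_bound z < 1"
  shows "W y = 0"
proof -
  have b: "norm (W y) \<le> f_bound z ^ n * K" for n
  proof (induction n arbitrary: y)
    case 0 then show ?case using K by simp
  next
    case (Suc n)
    have "norm (f_op adj z W y) \<le> f_bound z * (f_bound z ^ n * K)"
      by (rule norm_f_op_le) (rule Suc.IH)
    then show ?case using fx[of y] by (simp add: algebra_simps)
  qed
  have "(\<lambda>n. f_bound z ^ n * K) \<longlonglongrightarrow> 0 * K"
    by (intro tendsto_mult LIMSEQ_power_zero tendsto_const) (use r in auto)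
  then have "norm (W y) \<le> 0" using b by (intro LIMSEQ_le_const) auto
  then show ?thesis by simp
qed

definition T_series :: "('v \<Rightarrow> complex) \<Rightarrow> complex \<Rightarrow> 'v \<Rightarrow> complex" where
  "T_series g z x = (\<Sum>m. z ^ m * T_op adj m g x)"
definition neumann_series :: "('v \<Rightarrow> complex) \<Rightarrow> complex \<Rightarrow> 'v \<Rightarrow> complex" where
  "neumann_series g z x = (\<Sum>n. (f_op adj z ^^ n) g x)"

context
  fixes g :: "'v \<Rightarrow> complex" and z :: complex
  assumes norm_g_le_1: "\<And>y. norm (g y) \<le> 1" and z_small: "cmod z * \<alpha> < 1"
begin

lemma norm_T_op_term_le: "norm (z ^ m * T_op adj m g x) \<le> (cmod z * \<alpha>) ^ m"
proof -
  have "norm (z ^ m * T_op adj m g x) = cmod z ^ m * norm (T_op adj m g x)"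
    by (simp add: norm_mult norm_power)
  also have "\<dots> \<le> cmod z ^ m * \<alpha> ^ m" by (intro mult_left_mono norm_T_op_le norm_g_le_1) auto
  finally show ?thesis by (simp add: power_mult_distrib)
qed

lemma summable_alpha_geometric: "summable (\<lambda>m. (cmod z * \<alpha>) ^ m)"
  by (rule summable_geometric) (use z_small alpha_ge_1 in auto)

lemma T_series_sums: "(\<lambda>m. z ^ m * T_op adj m g x) sums T_series g z x"
  unfolding T_series_def
    by (intro summable_sums summable_comparison_test'[OF summable_alpha_geometric norm_T_op_term_le])

lemma norm_T_series_le: "norm (T_series g z x) \<le> (\<Sum>m. (cmod z * \<alpha>) ^ m)"
  unfolding T_series_def by (rule norm_suminf_le[OF norm_T_op_term_le summable_alpha_geometric])

lemma A_op_T_series_sums: "(\<lambda>m. z ^ m * A_op adj (T_op adj m g) x) sums A_op adj (T_series g z) x"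
  using A_op_sums[of "\<lambda>m y. z ^ m * T_op adj m g y" "T_series g z" x, OF T_series_sums]
  by (simp add: op_linear_scale[OF op_linear_A_op])

lemma Q_op_T_series_sums: "(\<lambda>m. z ^ m * Q_op adj (T_op adj m g) x) sums Q_op adj (T_series g z) x"
  using Q_op_sums[of "\<lambda>m y. z ^ m * T_op adj m g y" "T_series g z" x, OF T_series_sums]
  by (simp add: op_linear_scale[OF op_linear_Q_op])

lemma T_series_fixed_point: "T_series g z x = g x + f_op adj z (T_series g z) x"
proof -
  let ?t = "\<lambda>m. z ^ m * T_op adj m g x"
  let ?S = "z * (A_op adj (T_series g z) x - A_op adj g x) - z\<^sup>2 * Q_op adj (T_series g z) x"
  have "(\<lambda>m. z ^ Suc m * A_op adj (T_op adj (Suc m) g) x)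
      sums (A_op adj (T_series g z) x - A_op adj g x)"
    using A_op_T_series_sums by (subst sums_Suc_iff) simp
  then have "(\<lambda>m. z * (z ^ Suc m * A_op adj (T_op adj (Suc m) g) x)
      - z\<^sup>2 * (z ^ m * Q_op adj (T_op adj m g) x)) sums ?S"
    by (intro sums_diff sums_mult Q_op_T_series_sums)
  then have "(\<lambda>m. ?t (m + 2)) sums ?S"
    by (simp add: algebra_simps power2_eq_square)
  then have "?t sums (?S + (\<Sum>m<2. ?t m))"
    using sums_iff_shift[of ?t 2 ?S] by simp
  then have "T_series g z x = ?S + (\<Sum>m<2. ?t m)"
    using T_series_sums sums_unique2 by blast
  then show ?thesis by (simp add: numeral_2_eq_2 f_op_def algebra_simps)
qed

lemma f_bound_z_less_1: "f_bound z < 1" by (rule f_bound_less_1[OF z_small])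

lemma norm_f_op_power_g_le: "norm ((f_op adj z ^^ n) g x) \<le> f_bound z ^ n"
  using norm_f_op_power_le[where h=g and K=1 and z=z and n=n and x=x] norm_g_le_1 by simp

lemma summable_f_bound_geometric: "summable (\<lambda>n. f_bound z ^ n)"
  by (rule summable_geometric) (use f_bound_z_less_1 in auto)

lemma neumann_series_sums: "(\<lambda>n. (f_op adj z ^^ n) g x) sums neumann_series g z x"
  unfolding neumann_series_def
    by (intro summable_sums
        summable_comparison_test'[OF summable_f_bound_geometric norm_f_op_power_g_le])

lemma norm_neumann_series_le: "norm (neumann_series g z x) \<le> (\<Sum>n. f_bound z ^ n)"
  unfolding neumann_series_def
    by (rule norm_suminf_le[OF norm_f_op_power_g_le summable_f_bound_geometric])

lemma neumann_series_fixed_point: "neumann_series g z x = g x + f_op adj z (neumann_series g z) x"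
proof -
  have "(\<lambda>n. f_op adj z ((f_op adj z ^^ n) g) x) sums f_op adj z (neumann_series g z) x"
    by (rule f_op_sums) (rule neumann_series_sums)
  then have "(\<lambda>n. (f_op adj z ^^ Suc n) g x) sums f_op adj z (neumann_series g z) x" by simp
  then have "(\<lambda>n. (f_op adj z ^^ n) g x)
      sums (f_op adj z (neumann_series g z) x + (f_op adj z ^^ 0) g x)"
    by (rule iffD1[OF sums_Suc_iff[of "\<lambda>n. (f_op adj z ^^ n) g x"]])
  then have "(\<lambda>n. (f_op adj z ^^ n) g x) sums (f_op adj z (neumann_series g z) x + g x)" by simp
  then show ?thesis using neumann_series_sums sums_unique2 by (metis add.commute)
qed

lemma T_series_eq_neumann_series: "T_series g z x = neumann_series g z x"
proof -
  let ?W = "\<lambda>y. T_series g z y - neumann_series g z y"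
  have "?W x = 0"
  proof (rule bounded_fixed_point_eq_0[OF _ _ f_bound_z_less_1])
    fix y
    show "norm (?W y) \<le> (\<Sum>m. (cmod z * \<alpha>) ^ m) + (\<Sum>n. f_bound z ^ n)"
      using norm_triangle_ineq4[of "T_series g z y" "neumann_series g z y"]
        norm_T_series_le[of y] norm_neumann_series_le[of y]
        by linarith
    show "?W y = f_op adj z ?W y"
      using T_series_fixed_point[of y] neumann_series_fixed_point[of y]
        by (simp add: op_linear_diff[OF op_linear_f_op])
  qed
  then show ?thesis by simp
qed

lemma B_op_generating_sums:
  "(\<lambda>k. z ^ k * B_op adj (Suc k) g x) sums (df_op adj z (T_series g z) x + z * (Q_op adj g x - g x))"
proof -
  let ?d = "\<lambda>m. if m = 0 then 0 else z ^ m * Q_op adj (T_op adj (m - 1) g) x"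
  have "(\<lambda>m. ?d (Suc m)) sums (z * Q_op adj (T_series g z) x)"
    using sums_mult[OF Q_op_T_series_sums, of z] by (simp add: algebra_simps)
  then have sd: "?d sums (z * Q_op adj (T_series g z) x)"
    using sums_Suc_iff[of ?d] by simp
  let ?c = "\<lambda>m. z ^ m * A_op adj (T_op adj m g) x
      - 2 * ?d m + (if m = 1 then z * (Q_op adj g x - g x) else 0)"
  have sc: "?c sums (A_op adj (T_series g z) x - 2 * (z * Q_op adj (T_series g z) x)
      + z * (Q_op adj g x - g x))"
    using sums_single[of 1 "\<lambda>_. z * (Q_op adj g x - g x)"]
    by (intro sums_add sums_diff sums_mult A_op_T_series_sums sd) simp
  have "?c k = z ^ k * B_op adj (Suc k) g x" for k
  proof -
    have "k = 0 \<or> k = 1 \<or> k = Suc (Suc (k - 2))" by auto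
    then consider "k = 0" | "k = 1" | j where "k = Suc (Suc j)" by blast
    then show ?thesis
    proof cases
      case 1 then show ?thesis by (simp add: B_op_def C_op_1)
    next
      case 2
      have "B_op adj 2 g x = T_op adj 2 g x - g x" by (rule B_op_2)
      then have "A_op adj (A_op adj g) x = g x + (Q_op adj g x + B_op adj (Suc (Suc 0)) g x)"
        by (simp add: numeral_2_eq_2)
      then show ?thesis using 2 by (simp add: algebra_simps)
    next
      case 3
      have "B_op adj (Suc k) g x = T_op adj (Suc k) g x - Q_op adj (T_op adj (Suc k - 2) g) x"
        by (rule B_op_eq_T_op) (use 3 in simp)
      then have e: "A_op adj (T_op adj (Suc (Suc j)) g) x
          = B_op adj (Suc k) g x + 2 * Q_op adj (T_op adj (Suc j) g) x"
        using 3 by simp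
      show ?thesis using 3 by (simp only: e) (simp add: algebra_simps)
    qed
  qed
  then have "?c = (\<lambda>k. z ^ k * B_op adj (Suc k) g x)" by (simp add: fun_eq_iff)
  then show ?thesis using sc by (simp add: df_op_def algebra_simps)
qed

lemma df_op_neumann_series_sums:
  "(\<lambda>n. df_op adj z ((f_op adj z ^^ n) g) x) sums df_op adj z (T_series g z) x"
proof -
  have "T_series g z = neumann_series g z"
    using T_series_eq_neumann_series by (simp add: fun_eq_iff)
  then show ?thesis
    using df_op_sums[of "\<lambda>n. (f_op adj z ^^ n) g" "neumann_series g z", OF neumann_series_sums]
    by simp
qed

end

lemma norm_log_series_derivative_term_le:
  assumes g: "\<And>y. norm (g y) \<le> 1"
  shows "norm ((\<Sum>i<Suc n. (f_op adj w ^^ i) (df_op adj w ((f_op adj w ^^ (n - i)) g)) x)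
      / of_nat (Suc n))
     \<le> (real M + 2 * cmod w * real M) * f_bound w ^ n"
proof -
  let ?C = "real M + 2 * cmod w * real M"
  have "norm ((f_op adj w ^^ i) (df_op adj w ((f_op adj w ^^ (n - i)) g)) x) \<le> ?C * f_bound w ^ n"
    if i: "i < Suc n" for i
  proof -
    have "norm ((f_op adj w ^^ i) (df_op adj w ((f_op adj w ^^ (n - i)) g)) x)
       \<le> f_bound w ^ i * (?C * (f_bound w ^ (n - i) * 1))"
      by (intro norm_f_op_power_le norm_df_op_le g)
    also have "\<dots> = ?C * f_bound w ^ n"
      using i by (simp add: power_add[symmetric])
    finally show ?thesis .
  qed
  then have "norm (\<Sum>i<Suc n. (f_op adj w ^^ i) (df_op adj w ((f_op adj w ^^ (n - i)) g)) x)
      \<le> real (Suc n) * (?C * f_bound w ^ n)"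
    by (intro order_trans[OF norm_sum] order_trans[OF sum_bounded_above]) auto
  then show ?thesis
    unfolding norm_divide norm_of_nat by (simp add: divide_le_eq mult.commute del: of_nat_Suc)
qed

lemma f_bound_mono: "cmod w \<le> cmod v \<Longrightarrow> f_bound w \<le> f_bound v"
  by (intro add_mono mult_left_mono power_mono) auto

lemma log_series_has_derivative:
  assumes g: "\<And>y. norm (g y) \<le> 1" and z_small: "cmod z * \<alpha> < 1"
  shows "((\<lambda>w. \<Sum>n. (f_op adj w ^^ Suc n) g x / of_nat (Suc n)) has_field_derivative
     (\<Sum>n. (\<Sum>i<Suc n. (f_op adj z ^^ i) (df_op adj z ((f_op adj z ^^ (n - i)) g)) x)
       / of_nat (Suc n)))
     (at z)"
proof -
  obtain r where zr: "cmod z < r" and r0: "0 < r" and ral: "r * \<alpha> < 1"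
    using radius_between[OF z_small] alpha_ge_1 by auto
  let ?v = "complex_of_real r"
  let ?D = "\<lambda>n w. (\<Sum>i<Suc n. (f_op adj w ^^ i) (df_op adj w ((f_op adj w ^^ (n - i)) g)) x)
                  / of_nat (Suc n)"
  have v: "cmod ?v = r" using r0 by simp
  have v_bound: "f_bound ?v < 1" by (rule f_bound_less_1) (use ral v in simp)
  show ?thesis
  proof (rule has_field_derivative_series'(2)[where S="ball 0 r"
      and f="\<lambda>n w. (f_op adj w ^^ Suc n) g x / of_nat (Suc n)" and f'="?D"])
    fix n w
    show "((\<lambda>w. (f_op adj w ^^ Suc n) g x / of_nat (Suc n)) has_field_derivative ?D n w)
        (at w within ball 0 r)"
      using f_op_power_has_derivative[of "Suc n" g x w] unfolding diff_Suc_1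
      by (rule DERIV_cdivide[THEN has_field_derivative_at_within])
  next
    show "uniformly_convergent_on (ball 0 r) (\<lambda>n w. \<Sum>i<n. ?D i w)"
    proof (rule Weierstrass_m_test'[where M="\<lambda>n. (real M + 2 * r * real M) * f_bound ?v ^ n"])
      fix n and w :: complex
      assume "w \<in> ball 0 r"
      then have wr: "cmod w \<le> cmod ?v" using v by simp
      have "norm (?D n w) \<le> (real M + 2 * cmod w * real M) * f_bound w ^ n"
        by (rule norm_log_series_derivative_term_le[OF g])
      also have "\<dots> \<le> (real M + 2 * r * real M) * f_bound ?v ^ n"
        using wr v r0 by (intro mult_mono power_mono f_bound_mono) (auto simp: mult_right_mono)
      finally show "norm (?D n w) \<le> (real M + 2 * r * real M) * f_bound ?v ^ n" .
    next
      show "summable (\<lambda>n. (real M + 2 * r * real M) * f_bound ?v ^ n)"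
        using v_bound by (intro summable_mult summable_geometric) simp
    qed
  next
    have "(\<lambda>n. (f_op adj 0 ^^ Suc n) g x / of_nat (Suc n)) = (\<lambda>n. 0)"
      by (simp add: f_op_def fun_eq_iff)
    then show "summable (\<lambda>n. (f_op adj 0 ^^ Suc n) g x / of_nat (Suc n))" by simp
  qed (use r0 zr in auto)
qed

lemma norm_R_op_shifted_le:
  assumes g: "\<And>y. norm (g y) \<le> 1"
  shows "norm (R_op adj (k + 3) g x) \<le> (18 * real M * \<alpha> ^ 3) * real (k + 1) ^ 2 * \<alpha> ^ k"
proof -
  have "norm (R_op adj (k + 3) g x) \<le> 2 * real M * real (k + 3) ^ 2 * \<alpha> ^ (k + 3)"
    by (rule norm_R_op_le[OF g])
  also have "\<dots> \<le> 2 * real M * (9 * real (k + 1) ^ 2) * \<alpha> ^ (k + 3)"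
  proof -
    have "real (k + 3) ^ 2 \<le> 9 * real (k + 1) ^ 2" by (simp add: power2_eq_square algebra_simps)
    then show ?thesis using alpha_ge_1 by (intro mult_right_mono mult_left_mono) auto
  qed
  also have "\<dots> = (18 * real M * \<alpha> ^ 3) * real (k + 1) ^ 2 * \<alpha> ^ k"
    by (simp add: power_add algebra_simps)
  finally show ?thesis .
qed

lemma norm_Rplus_op_le:
  "norm (Rplus_op adj m g x) \<le> norm (Q_op adj g x - g x) + norm (R_op adj m g x)"
proof (cases "m \<le> 2")
  case False
  have "norm ((if even m then Q_op adj g x - g x else 0) + R_op adj m g x)
      \<le> norm (if even m then Q_op adj g x - g x else 0) + norm (R_op adj m g x)"
    by (rule norm_triangle_ineq)
  also have "norm (if even m then Q_op adj g x - g x else 0) \<le> norm (Q_op adj g x - g x)" by auto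
  finally show ?thesis using False by (simp add: Rplus_op_def)
qed (simp add: Rplus_op_def)

lemma norm_N_op_le:
  assumes g: "\<And>y. norm (g y) \<le> 1"
  shows "norm (N_op adj (Suc k) g x)
    \<le> (2 * \<alpha> + 2 * real M + 2 * real M * \<alpha>) * real (k + 1) ^ 2 * \<alpha> ^ k"
proof -
  let ?P = "real (k + 1) ^ 2 * \<alpha> ^ k"
  have k1: "1 \<le> real (k + 1) ^ 2" and "1 \<le> \<alpha> ^ k" using alpha_ge_1 by simp_all
  then have P: "1 \<le> ?P" using mult_mono[of 1 "real (k + 1) ^ 2" 1 "\<alpha> ^ k"] by simp
  have "\<alpha> ^ k \<le> ?P" using k1 alpha_ge_1 by (simp add: mult_le_cancel_right1)
  have "norm (B_op adj (Suc k) g x) \<le> 2 * \<alpha> * \<alpha> ^ k"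
    using norm_B_op_le[where g=g and m="Suc k" and x=x, OF g] by simp
  also have "\<dots> \<le> 2 * \<alpha> * ?P"
    using \<open>\<alpha> ^ k \<le> ?P\<close> alpha_ge_1 by (intro mult_left_mono) auto
  finally have B: "norm (B_op adj (Suc k) g x) \<le> 2 * \<alpha> * ?P" .
  have "norm (Q_op adj g x - g x) \<le> real M * 1 + 1"
    using norm_triangle_ineq4[of "Q_op adj g x" "g x"] norm_Q_op_le[where h=g and x=x, OF g] g[of x]
      by linarith
  also have "\<dots> \<le> 2 * real M * 1" using M_ge_1 by simp
  also have "\<dots> \<le> 2 * real M * ?P" using P by (intro mult_left_mono) auto
  finally have Q: "norm (Q_op adj g x - g x) \<le> 2 * real M * ?P" .
  have R: "norm (R_op adj (Suc k) g x) \<le> 2 * real M * \<alpha> * ?P"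
    using norm_R_op_le[where g=g and m="Suc k" and x=x, OF g] by (simp add: algebra_simps)
  have "norm (N_op adj (Suc k) g x) \<le> norm (B_op adj (Suc k) g x) + norm (Rplus_op adj (Suc k) g x)"
    unfolding N_op_def by (rule norm_triangle_ineq)
  then show ?thesis
    using B Q R norm_Rplus_op_le[of "Suc k" g x] by (simp add: algebra_simps)
qed

lemma norm_less_1_if_small: "cmod z * \<alpha> < 1 \<Longrightarrow> cmod z < 1"
  using mult_left_mono[OF alpha_ge_1, of "cmod z"] by simp

context
  fixes g :: "'v \<Rightarrow> complex" and z :: complex
  assumes norm_g_le_1: "\<And>y. norm (g y) \<le> 1" and z_small: "cmod z * \<alpha> < 1"
begin

lemma R_op_generating_sums:
  "(\<lambda>k. R_op adj (Suc k) g x * z ^ k) sums (\<Sum>k. R_op adj (k + 3) g x * z ^ (k + 2))"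
proof -
  have "summable (\<lambda>k. R_op adj (k + 3) g x * z ^ (k + 2))"
  proof (rule summable_comparison_test')
    show "summable (\<lambda>k. (18 * real M * \<alpha> ^ 3 * cmod z ^ 2) * (real (k + 1) ^ 2 * (\<alpha> * cmod z) ^ k))"
      by (rule summable_mult, rule summable_square_times_geometric)
        (use z_small alpha_ge_1 in \<open>auto simp: mult.commute\<close>)
    fix n :: nat
    have "norm (R_op adj (n + 3) g x * z ^ (n + 2))
        \<le> ((18 * real M * \<alpha> ^ 3) * real (n + 1) ^ 2 * \<alpha> ^ n) * cmod z ^ (n + 2)"
      unfolding norm_mult norm_power
        by (intro mult_right_mono norm_R_op_shifted_le norm_g_le_1) auto
    also have "\<dots> = (18 * real M * \<alpha> ^ 3 * cmod z ^ 2) * (real (n + 1) ^ 2 * (\<alpha> * cmod z) ^ n)"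
      by (simp add: power_add power_mult_distrib power2_eq_square algebra_simps)
    finally show "norm (R_op adj (n + 3) g x * z ^ (n + 2))
        \<le> (18 * real M * \<alpha> ^ 3 * cmod z ^ 2) * (real (n + 1) ^ 2 * (\<alpha> * cmod z) ^ n)" .
  qed
  then have "(\<lambda>k. R_op adj (Suc (k + 2)) g x * z ^ (k + 2))
      sums (\<Sum>k. R_op adj (k + 3) g x * z ^ (k + 2))"
    by (simp add: summable_sums numeral_3_eq_3)
  moreover have "(\<lambda>k. R_op adj (Suc (k + 2)) g x * z ^ (k + 2)) sums s
      \<longleftrightarrow> (\<lambda>k. R_op adj (Suc k) g x * z ^ k) sums s" for s
    by (rule sums_zero_iff_shift) (simp add: R_op_def)
  ultimately show ?thesis by blast
qed

lemma N_op_generating_sums: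
  "(\<lambda>k. N_op adj (Suc k) g x * z ^ k) sums
     (df_op adj z (T_series g z) x + (Q_op adj g x - g x) * (z + z ^ 3 / (1 - z\<^sup>2))
      + (\<Sum>k. R_op adj (k + 3) g x * z ^ (k + 2)))"
proof -
  let ?c = "Q_op adj g x - g x"
  have "(\<lambda>k. (if 2 \<le> k \<and> odd k then ?c * z ^ k else 0) + R_op adj (Suc k) g x * z ^ k)
      sums (?c * z ^ 3 / (1 - z\<^sup>2) + (\<Sum>k. R_op adj (k + 3) g x * z ^ (k + 2)))"
    using odd_power_tail_sums[OF norm_less_1_if_small[OF z_small]] R_op_generating_sums
    by (rule sums_add)
  moreover have "(if 2 \<le> k \<and> odd k then ?c * z ^ k else 0) + R_op adj (Suc k) g x * z ^ k
      = Rplus_op adj (Suc k) g x * z ^ k" for k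
    by (auto simp: Rplus_op_def R_op_def algebra_simps)
  ultimately have "(\<lambda>k. Rplus_op adj (Suc k) g x * z ^ k)
      sums (?c * z ^ 3 / (1 - z\<^sup>2) + (\<Sum>k. R_op adj (k + 3) g x * z ^ (k + 2)))"
    by simp
  from sums_add[OF B_op_generating_sums[where g=g and z=z and x=x, OF norm_g_le_1 z_small] this]
  show ?thesis by (simp add: N_op_def algebra_simps)
qed

lemma log_series_derivative_eq:
  "(\<Sum>n. (\<Sum>i<Suc n. (f_op adj z ^^ i) (df_op adj z ((f_op adj z ^^ (n - i)) g)) x) / of_nat (Suc n))
   = df_op adj z (T_series g z) x
     - z\<^sup>2 * (\<Sum>n. 1 / of_nat (Suc n) * (\<Sum>j=1..n. of_nat j *
                   (f_op adj z ^^ (n - j)) (comm_AD adj ((f_op adj z ^^ (j - 1)) g)) x))"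
  (is "suminf ?D = _ - z\<^sup>2 * suminf ?I")
proof -
  let ?f = "f_op adj z"
  have "summable ?D"
  proof (rule summable_comparison_test')
    show "summable (\<lambda>n. (real M + 2 * cmod z * real M) * f_bound z ^ n)"
      using f_bound_less_1[OF z_small] by (intro summable_mult summable_geometric) simp
  qed (rule norm_log_series_derivative_term_le[OF norm_g_le_1])
  have "?D n = df_op adj z ((?f ^^ n) g) x - z\<^sup>2 * ?I n" for n
  proof -
    have "(of_nat (Suc n) :: complex) \<noteq> 0" by (simp only: of_nat_eq_0_iff)
    then show ?thesis by (simp only: sum_f_op_power_df_op) (simp add: field_simps)
  qed
  then have "(\<lambda>n. z\<^sup>2 * ?I n) = (\<lambda>n. df_op adj z ((?f ^^ n) g) x - ?D n)"
    by simp
  then have I_sums: "(\<lambda>n. z\<^sup>2 * ?I n) sums (df_op adj z (T_series g z) x - suminf ?D)"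
    using sums_diff[OF df_op_neumann_series_sums[where g=g and z=z and x=x, OF norm_g_le_1 z_small]
        summable_sums[OF \<open>summable ?D\<close>]]
    by simp
  have "z\<^sup>2 * suminf ?I = df_op adj z (T_series g z) x - suminf ?D"
  proof (cases "z = 0")
    case True
    then have "(\<lambda>n. z\<^sup>2 * ?I n) sums 0" by simp
    from sums_unique2[OF I_sums this] True show ?thesis by simp
  next
    case False
    then show ?thesis using sums_divide[OF I_sums, of "z\<^sup>2"] by (simp add: sums_iff)
  qed
  then show ?thesis by simp
qed

end

lemma norm_delta_le: "norm (delta x0 y) \<le> 1"
  by (simp add: delta_def)

section \<open>Integrating the logarithmic derivative\<close>

lemma N_series_has_derivative:
  assumes g: "\<And>y. norm (g y) \<le> 1" and z: "cmod z * \<alpha> < 1"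
  shows "((\<lambda>w. \<Sum>k. N_op adj (Suc k) g x / of_nat (Suc k) * w ^ Suc k)
          has_field_derivative (\<Sum>k. N_op adj (Suc k) g x * z ^ k)) (at z)"
proof -
  have "((\<lambda>w. \<Sum>k. N_op adj (Suc k) g x / of_nat (k + 1) * w ^ (k + 1))
          has_field_derivative (\<Sum>k. N_op adj (Suc k) g x * z ^ (k + 1 - 1))) (at z)"
    by (rule power_series_antiderivative[where C="2 * \<alpha> + 2 * real M + 2 * real M * \<alpha>" and q=\<alpha>])
      (use norm_N_op_le[OF g] alpha_ge_1 z in auto)
  then show ?thesis by simp
qed

lemma R_series_has_derivative:
  assumes g: "\<And>y. norm (g y) \<le> 1" and z: "cmod z * \<alpha> < 1"
  shows "((\<lambda>w. \<Sum>k. R_op adj (k + 3) g x / of_nat (k + 3) * w ^ (k + 3))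
          has_field_derivative (\<Sum>k. R_op adj (k + 3) g x * z ^ (k + 2))) (at z)"
proof -
  have "((\<lambda>w. \<Sum>k. R_op adj (k + 3) g x / of_nat (k + 3) * w ^ (k + 3))
          has_field_derivative (\<Sum>k. R_op adj (k + 3) g x * z ^ (k + 3 - 1))) (at z)"
    by (rule power_series_antiderivative[where C="18 * real M * \<alpha> ^ 3" and q=\<alpha>])
      (use norm_R_op_shifted_le[OF g] alpha_ge_1 z in auto)
  moreover have "k + 3 - 1 = k + 2" for k :: nat by simp
  ultimately show ?thesis by simp
qed

lemma log_Z_derivative_eq:
  assumes z: "cmod z * \<alpha> < 1"
  shows "(\<Sum>k. N_op adj (Suc k) (delta x0) x * z ^ k)
     - (- ((of_nat (deg adj x0) - 2) / 2) * delta x0 x) * (inverse (1 - z\<^sup>2) * (- (2 * z)))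
     - (\<Sum>n. (\<Sum>i<Suc n. (f_op adj z ^^ i) (df_op adj z ((f_op adj z ^^ (n - i)) (delta x0))) x)
            / of_nat (Suc n))
     - (\<Sum>k. R_op adj (k + 3) (delta x0) x * z ^ (k + 2))
   = z\<^sup>2 * (\<Sum>k. 1 / of_nat (Suc k) *
           (\<Sum>j=1..k. of_nat j *
              kernel (f_op adj z ^^ (k - j) \<circ> comm_AD adj \<circ> f_op adj z ^^ (j - 1)) x0 x))"
proof -
  let ?c = "Q_op adj (delta x0) x - delta x0 x"
  have w: "- ((of_nat (deg adj x0) - 2) / 2) * delta x0 x = - (?c / 2)"
    by (auto simp: Q_op_def D_op_def delta_def)
  have "cmod (z\<^sup>2) < 1"
    using norm_less_1_if_small[OF z] by (simp add: norm_power abs_square_less_1)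
  then have "1 - z\<^sup>2 \<noteq> 0" by auto
  then have zero: "z + z ^ 3 / (1 - z\<^sup>2) - z / (1 - z\<^sup>2) = 0"
    by (simp add: field_simps power2_eq_square power3_eq_cube)
  have collect: "(a + c * (z + z ^ 3 / q) + s) - (- (c / 2)) * (inverse q * (- (2 * z)))
      - (a - z\<^sup>2 * i) - s
      = z\<^sup>2 * i + c * (z + z ^ 3 / q - z / q)" for a c s i q :: complex
    unfolding divide_inverse by (simp add: ring_distribs)
  have kernel_form: "(f_op adj z ^^ (k - j)) (comm_AD adj ((f_op adj z ^^ (j - 1)) (delta x0))) x
      = kernel (f_op adj z ^^ (k - j) \<circ> comm_AD adj \<circ> f_op adj z ^^ (j - 1)) x0 x" for k j
    by (simp add: kernel_def)
  show ?thesis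
    unfolding w sums_unique[OF N_op_generating_sums[OF norm_delta_le z], symmetric]
      log_series_derivative_eq[OF norm_delta_le z] collect zero kernel_form
    by simp
qed

lemma log_Z_series_eq:
  assumes u: "cmod u * \<alpha> < 1"
  shows "(\<Sum>k. N_op adj (Suc k) (delta x0) x / of_nat (Suc k) * u ^ Suc k)
    = - ((of_nat (deg adj x0) - 2) / 2) * delta x0 x * ln (1 - u\<^sup>2)
      + (\<Sum>n. (f_op adj u ^^ Suc n) (delta x0) x / of_nat (Suc n))
      + contour_integral (linepath 0 u)
          (\<lambda>z. z\<^sup>2 * (\<Sum>k. 1 / of_nat (Suc k) *
             (\<Sum>j=1..k. of_nat j *
                kernel (f_op adj z ^^ (k - j) \<circ> comm_AD adj \<circ> f_op adj z ^^ (j - 1)) x0 x)))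
      + (\<Sum>k. R_op adj (k + 3) (delta x0) x / of_nat (k + 3) * u ^ (k + 3))"
    (is "?N u = ?w * ln (1 - u\<^sup>2) + ?L u + contour_integral _ ?ig + ?R u")
proof -
  define H where "H w = ?N w - ?w * ln (1 - w\<^sup>2) - ?L w - ?R w" for w
  let ?S = "ball (0::complex) (1 / \<alpha>)"
  have "(H has_field_derivative ?ig z) (at z within ?S)" if "z \<in> ?S" for z
  proof -
    have z: "cmod z * \<alpha> < 1" using that alpha_ge_1 by (simp add: field_simps)
    have "(H has_field_derivative ?ig z) (at z)"
      unfolding H_def log_Z_derivative_eq[OF z, symmetric]
      by (intro DERIV_diff DERIV_cmult N_series_has_derivative R_series_has_derivative
          log_series_has_derivative ln_one_minus_square_has_derivative norm_less_1_if_small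
          norm_delta_le z)
    then show ?thesis by (rule has_field_derivative_at_within)
  qed
  moreover have "closed_segment 0 u \<subseteq> ?S"
    using u alpha_ge_1 by (intro closed_segment_subset) (auto simp: field_simps)
  then have "path_image (linepath 0 u) \<subseteq> ?S" by simp
  ultimately have "(?ig has_contour_integral (H u - H 0)) (linepath 0 u)"
    using contour_integral_primitive[of ?S H ?ig "linepath 0 u"] by simp
  moreover have "H 0 = 0"
    unfolding H_def by (simp add: f_op_def power_add)
  ultimately have "contour_integral (linepath 0 u) ?ig = H u"
    by (simp add: contour_integral_unique)
  then show ?thesis unfolding H_def by (simp add: algebra_simps)
qed

lemma Z_X_factorization:
  assumes u: "cmod u * \<alpha> < 1"
  shows "Z_X adj u x0 x =
     (1 - u\<^sup>2) powr (- ((of_nat (deg adj x0) - 2) / 2) * delta x0 x)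
   * exp (\<Sum>n. kernel (f_op adj u ^^ Suc n) x0 x / of_nat (Suc n))
   * exp (contour_integral (linepath 0 u)
        (\<lambda>z. z\<^sup>2 * (\<Sum>k. 1 / of_nat (Suc k) *
           (\<Sum>j=1..k. of_nat j *
              kernel (f_op adj z ^^ (k - j) \<circ> comm_AD adj \<circ> f_op adj z ^^ (j - 1)) x0 x))))
   * exp (\<Sum>k. kernel (R_op adj (k + 3)) x0 x / of_nat (k + 3) * u ^ (k + 3))"
proof -
  have "cmod (u\<^sup>2) < 1"
    using norm_less_1_if_small[OF u] by (simp add: norm_power abs_square_less_1)
  then have "1 - u\<^sup>2 \<noteq> 0" by auto
  then have "(1 - u\<^sup>2) powr (- ((of_nat (deg adj x0) - 2) / 2) * delta x0 x)
      = exp (- ((of_nat (deg adj x0) - 2) / 2) * delta x0 x * ln (1 - u\<^sup>2))"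
    by (simp add: powr_def)
  then show ?thesis
    unfolding Z_X_def kernel_def log_Z_series_eq[OF u] exp_add by simp
qed

end

theorem theorem4p4:
  fixes adj :: "'v::countable \<Rightarrow> 'v \<Rightarrow> bool" and u :: complex and x0 x :: 'v
  assumes "simple_graph adj" and "connected_graph adj" and "bounded_degree adj"
    and "\<forall>y. deg adj y \<noteq> 1"
    and "cmod u < 1 / alpha adj"
  shows "Z_X adj u x0 x =
     (1 - u\<^sup>2) powr (- ((of_nat (deg adj x0) - 2) / 2) * delta x0 x)
   * exp (- log_I_minus_kernel
        (\<lambda>g y. (D_op adj g y - Delta_op adj g y) * u - (D_op adj g y - g y) * u\<^sup>2) x0 x)
   * exp (contour_integral (linepath 0 u)
        (\<lambda>z. z\<^sup>2 * (\<Sum>k. 1 / of_nat (Suc k) *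
           (\<Sum>j=1..k. of_nat j *
              kernel (f_op adj z ^^ (k - j) \<circ> comm_AD adj \<circ> f_op adj z ^^ (j - 1)) x0 x))))
   * exp (\<Sum>k. kernel (R_op adj (k + 3)) x0 x / of_nat (k + 3) * u ^ (k + 3))"
proof -
  let ?M = "max_deg adj"
  obtain K where "\<And>y. finite (nbrs adj y)" and "\<And>y. deg adj y \<le> K"
    using assms(3) unfolding bounded_degree_def by blast
  then have "deg adj y \<le> ?M" for y
    unfolding max_deg_def by (intro cSUP_upper bdd_aboveI[where M=K]) auto
  have alpha: "alpha adj = growth_rate ?M"
    unfolding alpha_def growth_rate_def Let_def ..
  \<comment> \<open>If \<open>M = 0\<close> then \<open>alpha adj = 0\<close>, hence \<open>1 / alpha adj = 0\<close> and the bound on \<open>u\<close> fails.\<close>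
  have "1 \<le> ?M"
    using assms(5) unfolding alpha growth_rate_def by (cases "?M = 0") auto
  then interpret bounded_degree_graph adj ?M
    using assms(1) \<open>\<And>y. finite (nbrs adj y)\<close> \<open>\<And>y. deg adj y \<le> ?M\<close>
    by unfold_locales (auto simp: simple_graph_def)
  have u: "cmod u * \<alpha> < 1"
    using assms(5) alpha_ge_1 unfolding alpha by (simp add: field_simps)
  have f: "(\<lambda>g y. (D_op adj g y - Delta_op adj g y) * u - (D_op adj g y - g y) * u\<^sup>2) = f_op adj u"
    by (simp add: fun_eq_iff f_op_def Delta_op_def Q_op_def)
  show ?thesis
    unfolding log_I_minus_kernel_def minus_minus f by (rule Z_X_factorization[OF u])
qed

end
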